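(* Let $(X,\|\cdot\|_X)$ be a Banach space, $\mathcal{K}\subset X$ compact, and $\gamma\ge2\,\mathrm{rad}(\mathcal{K})$. (i) Let $\alpha>0$, $\beta\in\mathbb{R}$. If $\varepsilon_n(\mathcal{K})_X\le C\frac{(\log_2n)^\beta}{n^\alpha}$ for all $n\ge2$, then $d_n^\gamma(\mathcal{K})_X\le C\frac{(\log_2n)^\beta}{n^\alpha}$ for all $n\ge2$. If $\varepsilon_n(\mathcal{K})_X\ge C\frac{(\log_2n)^\beta}{n^\alpha}$ for all $n\ge2$ (with $C>0$), then there is $C'>0$ with $d_n^\gamma(\mathcal{K})_X\ge C'\frac{(\log_2n)^\beta}{n^\alpha(\log_2n)^\alpha}$ for all $n\ge2$. (ii) Let $\alpha>0$. If $\varepsilon_n(\mathcal{K})_X\asymp(\log_2n)^{-\alpha}$ for $n\ge2$, then $d_n^\gamma(\mathcal{K})_X\asymp(\log_2n)^{-\alpha}$ for $n\ge2$. (iii) Let $0<\alpha<1$. If $\varepsilon_n(\mathcal{K})_X\le C2^{-cn^\alpha}$ for $n=1,2,\dots$, then $d_n^\gamma(\mathcal{K})_X\le C2^{-cn^\alpha}$ for $n=1,2,\dots$. If $\varepsilon_n(\mathcal{K})_X\ge C2^{-cn^\alpha}$ for $n=1,2,\dots$ (with $C,c>0$), then there are $C',c'>0$ with $d_n^\gamma(\mathcal{K})_X\ge C'2^{-c'n^{\alpha/(1-\alpha)}}$ for $n=1,2,\dots$.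
   Context: $a_n\asymp b_n$ means there are constants $0<c\le C$ independent of $n$ with $cb_n\le a_n\le Cb_n$. $\mathrm{rad}(\mathcal{K})=\inf_{g\in X}\sup_{f\in\mathcal{K}}\|f-g\|_X$. For $m\ge0$, the entropy number $\varepsilon_m(\mathcal{K})_X$ is the infimum of all $\varepsilon>0$ such that $\mathcal{K}$ is covered by $2^m$ closed balls of radius $\varepsilon$ with centers in $X$. For $k\ge1$ and a norm $\|\cdot\|_{Y_k}$ on $\mathbb{R}^k$ let $B_{Y_k}=\{y\in\mathbb{R}^k:\|y\|_{Y_k}\le1\}$. For $\gamma\ge0$, the fixed Lipschitz width is $d^\gamma(\mathcal{K},Y_k)_X=\inf_{\Phi}\sup_{f\in\mathcal{K}}\inf_{y\in B_{Y_k}}\|f-\Phi(y)\|_X$, the infimum over all maps $\Phi:B_{Y_k}\to X$ with $\|\Phi(y)-\Phi(y')\|_X\le\gamma\|y-y'\|_{Y_k}$ for all $y,y'\in B_{Y_k}$. The Lipschitz width is $d_n^\gamma(\mathcal{K})_X=\inf_{1\le k\le n}\inf_{\|\cdot\|_{Y_k}}d^\gamma(\mathcal{K},Y_k)_X$, the inner infimum over all norms on $\mathbb{R}^k$. *)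

theory Defs
  imports "HOL-Analysis.Analysis"
begin

text \<open>Suprema of nonnegative quantities; the 0 inserted makes the supremum over the
  empty set equal to 0 and does not change it otherwise.\<close>

definition rad :: "'a::real_normed_vector set \<Rightarrow> real" where
  "rad K = Inf ((\<lambda>g. Sup (insert 0 ((\<lambda>f. norm (f - g)) ` K))) ` UNIV)"

definition entropy_number :: "'a::real_normed_vector set \<Rightarrow> nat \<Rightarrow> real" where
  "entropy_number K m = Inf {eps. eps > 0 \<and>
      (\<exists>S. finite S \<and> card S \<le> 2 ^ m \<and> K \<subseteq> (\<Union>c\<in>S. cball c eps))}"

text \<open>R^k is modelled as the functions nat => real vanishing outside {0..<k}.\<close>
definition Rk :: "nat \<Rightarrow> (nat \<Rightarrow> real) set" where
  "Rk k = {y. \<forall>i\<ge>k. y i = 0}"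

definition is_norm_on_Rk :: "nat \<Rightarrow> ((nat \<Rightarrow> real) \<Rightarrow> real) \<Rightarrow> bool" where
  "is_norm_on_Rk k N \<longleftrightarrow>
     (\<forall>y\<in>Rk k. N y \<ge> 0 \<and> (N y = 0 \<longleftrightarrow> y = (\<lambda>_. 0))) \<and>
     (\<forall>a. \<forall>y\<in>Rk k. N (\<lambda>i. a * y i) = \<bar>a\<bar> * N y) \<and>
     (\<forall>y\<in>Rk k. \<forall>z\<in>Rk k. N (\<lambda>i. y i + z i) \<le> N y + N z)"

definition unit_ball_Rk :: "nat \<Rightarrow> ((nat \<Rightarrow> real) \<Rightarrow> real) \<Rightarrow> (nat \<Rightarrow> real) set" where
  "unit_ball_Rk k N = {y \<in> Rk k. N y \<le> 1}"

definition fixed_lipschitz_width ::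
    "real \<Rightarrow> 'a::real_normed_vector set \<Rightarrow> nat \<Rightarrow> ((nat \<Rightarrow> real) \<Rightarrow> real) \<Rightarrow> real" where
  "fixed_lipschitz_width \<gamma> K k N = Inf
     {Sup (insert 0 ((\<lambda>f. Inf ((\<lambda>y. norm (f - \<Phi> y)) ` unit_ball_Rk k N)) ` K)) | \<Phi>.
        \<forall>y\<in>unit_ball_Rk k N. \<forall>y'\<in>unit_ball_Rk k N.
           norm (\<Phi> y - \<Phi> y') \<le> \<gamma> * N (\<lambda>i. y i - y' i)}"

definition lipschitz_width :: "real \<Rightarrow> 'a::real_normed_vector set \<Rightarrow> nat \<Rightarrow> real" where
  "lipschitz_width \<gamma> K n = Inf
     {fixed_lipschitz_width \<gamma> K k N | k N. 1 \<le> k \<and> k \<le> n \<and> is_norm_on_Rk k N}"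

end

theory Submission
  imports Defs "Jordan_Normal_Form.Determinant" "HOL-Real_Asymp.Real_Asymp"
begin

text \<open>Upper bound: if 2^n balls of radius \<epsilon> around centres c cover K and g is a near-centre of K,
  give every relevant centre its own sign vector in {-1,1}^n and let
  \<Phi>(y) = g + (min_i |y_i|) t (c(sign y) - g) on the unit ball of the sup norm. The weight
  min_i |y_i| vanishes wherever the sign pattern changes, so \<Phi> is \<gamma>-Lipschitz, and \<Phi> hits a
  point close to every centre; this gives d_n \<le> \<epsilon>_n when \<gamma> \<ge> 2 rad K.

  Lower bound: for any norm on R^k, k \<le> n, a basis of the unit ball with nearly maximal
  determinant has coordinates bounded by 2, so the unit ball has a \<rho>-net of size
  (4k/\<rho> + 1)^k. The image of such a net under a \<gamma>-Lipschitz map covers K up to 2\<delta> when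
  d_n < \<delta>, hence \<epsilon>_M \<le> 2\<delta> for M \<approx> n log(n(\<gamma>+1)/\<delta>). Inverting this relation for the three
  given rates of \<epsilon>_n yields the stated rates of d_n.\<close>

section \<open>Norms on R^k\<close>

lemma Rk_diff: "y \<in> Rk k \<Longrightarrow> z \<in> Rk k \<Longrightarrow> (\<lambda>i. y i - z i) \<in> Rk k"
  and Rk_scale: "y \<in> Rk k \<Longrightarrow> (\<lambda>i. a * y i) \<in> Rk k"
  and Rk_zero: "(\<lambda>_. 0) \<in> Rk k"
  and Rk_sum: "(\<And>i. i \<in> I \<Longrightarrow> u i \<in> Rk k) \<Longrightarrow> (\<lambda>j. \<Sum>i\<in>I. c i * u i j) \<in> Rk k"
  by (auto simp: Rk_def)

definition unit_vec_Rk :: "nat \<Rightarrow> nat \<Rightarrow> real" where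
  "unit_vec_Rk i = (\<lambda>j. if j = i then 1 else 0)"

lemma unit_vec_Rk_in_Rk: "i < k \<Longrightarrow> unit_vec_Rk i \<in> Rk k"
  by (auto simp: Rk_def unit_vec_Rk_def)

lemma Rk_expand: "y \<in> Rk k \<Longrightarrow> y = (\<lambda>j. \<Sum>i<k. y i * unit_vec_Rk i j)"
  by (auto simp: Rk_def unit_vec_Rk_def fun_eq_iff if_distrib sum.delta cong: if_cong)

definition sup_norm_Rk :: "nat \<Rightarrow> (nat \<Rightarrow> real) \<Rightarrow> real" where
  "sup_norm_Rk n y = Max ((\<lambda>i. \<bar>y i\<bar>) ` {..<n})"

definition min_abs_Rk :: "nat \<Rightarrow> (nat \<Rightarrow> real) \<Rightarrow> real" where
  "min_abs_Rk n y = Min ((\<lambda>i. \<bar>y i\<bar>) ` {..<n})"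

context
  fixes n :: nat
  assumes n_pos: "n \<ge> 1"
begin

lemma abs_coords_finite_nonempty:
  "finite ((\<lambda>i. \<bar>y i\<bar>) ` {..<n})" "(\<lambda>i. \<bar>y i\<bar>) ` {..<n} \<noteq> {}"
  using n_pos by (simp_all add: lessThan_empty_iff)

lemma abs_le_sup_norm_Rk: "i < n \<Longrightarrow> \<bar>y i\<bar> \<le> sup_norm_Rk n y"
  unfolding sup_norm_Rk_def using abs_coords_finite_nonempty by (intro Max_ge) auto

lemma sup_norm_Rk_le_iff: "sup_norm_Rk n y \<le> c \<longleftrightarrow> (\<forall>i<n. \<bar>y i\<bar> \<le> c)"
  unfolding sup_norm_Rk_def using abs_coords_finite_nonempty[of y] by (auto simp: Max_le_iff)

lemma sup_norm_Rk_attained: "\<exists>i<n. sup_norm_Rk n y = \<bar>y i\<bar>"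
  using Max_in[OF abs_coords_finite_nonempty[of y]] unfolding sup_norm_Rk_def by auto

lemma min_abs_Rk_le: "i < n \<Longrightarrow> min_abs_Rk n y \<le> \<bar>y i\<bar>"
  unfolding min_abs_Rk_def using abs_coords_finite_nonempty by (intro Min_le) auto

lemma min_abs_Rk_attained: "\<exists>i<n. min_abs_Rk n y = \<bar>y i\<bar>"
  using Min_in[OF abs_coords_finite_nonempty[of y]] unfolding min_abs_Rk_def by auto

lemma min_abs_Rk_nonneg: "min_abs_Rk n y \<ge> 0"
  using min_abs_Rk_attained[of y] by auto

lemma min_abs_Rk_lipschitz: "\<bar>min_abs_Rk n y - min_abs_Rk n y'\<bar> \<le> sup_norm_Rk n (\<lambda>i. y i - y' i)"
proof -
  have le: "min_abs_Rk n y \<le> min_abs_Rk n y' + sup_norm_Rk n (\<lambda>i. y i - y' i)" for y y'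
  proof -
    obtain i where i: "i < n" "min_abs_Rk n y' = \<bar>y' i\<bar>" using min_abs_Rk_attained by blast
    have "min_abs_Rk n y \<le> \<bar>y' i\<bar> + \<bar>y i - y' i\<bar>" using min_abs_Rk_le[OF i(1), of y] by linarith
    then show ?thesis using i abs_le_sup_norm_Rk[OF i(1), of "\<lambda>i. y i - y' i"] by linarith
  qed
  have "sup_norm_Rk n (\<lambda>i. y' i - y i) = sup_norm_Rk n (\<lambda>i. y i - y' i)"
    unfolding sup_norm_Rk_def by (simp add: abs_minus_commute)
  then show ?thesis using le[of y y'] le[of y' y] by linarith
qed

lemma sup_norm_Rk_nonneg: "sup_norm_Rk n y \<ge> 0"
  using abs_le_sup_norm_Rk[of 0 y] n_pos by linarith

lemma sup_norm_Rk_scale: "sup_norm_Rk n (\<lambda>i. a * y i) = \<bar>a\<bar> * sup_norm_Rk n y"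
proof -
  have "sup_norm_Rk n (\<lambda>i. a * y i) \<le> \<bar>a\<bar> * sup_norm_Rk n y"
    unfolding sup_norm_Rk_le_iff using abs_le_sup_norm_Rk by (auto simp: abs_mult intro: mult_left_mono)
  moreover obtain i where "i < n" "sup_norm_Rk n y = \<bar>y i\<bar>" using sup_norm_Rk_attained by blast
  then have "\<bar>a\<bar> * sup_norm_Rk n y \<le> sup_norm_Rk n (\<lambda>i. a * y i)"
    using abs_le_sup_norm_Rk[of i "\<lambda>i. a * y i"] by (simp add: abs_mult)
  ultimately show ?thesis by linarith
qed

lemma is_norm_sup_norm_Rk: "is_norm_on_Rk n (sup_norm_Rk n)"
  unfolding is_norm_on_Rk_def
proof (intro conjI ballI allI sup_norm_Rk_scale sup_norm_Rk_nonneg)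
  fix y :: "nat \<Rightarrow> real" assume y: "y \<in> Rk n"
  have "sup_norm_Rk n y \<le> 0 \<longleftrightarrow> y = (\<lambda>_. 0)"
    using y by (auto simp: sup_norm_Rk_le_iff Rk_def fun_eq_iff) (meson not_le)
  then show "(sup_norm_Rk n y = 0) = (y = (\<lambda>_. 0))" using sup_norm_Rk_nonneg[of y] by linarith
next
  fix y z :: "nat \<Rightarrow> real"
  show "sup_norm_Rk n (\<lambda>i. y i + z i) \<le> sup_norm_Rk n y + sup_norm_Rk n z"
    unfolding sup_norm_Rk_le_iff
    using abs_le_sup_norm_Rk abs_triangle_ineq by (meson add_mono order_trans)
qed

end

lemma compact_Rk_unit_sphere_sup_norm:
  assumes "k \<ge> 1"
  shows "compact {y \<in> Rk k. sup_norm_Rk k y = 1}"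
proof -
  define X where "X i = (if i < k then {-1..1::real} else {0})" for i
  have "y \<in> PiE UNIV X \<and> (\<exists>i<k. \<bar>y i\<bar> = 1)" if "y \<in> Rk k" "sup_norm_Rk k y = 1" for y
    using that assms sup_norm_Rk_le_iff[of k y 1] sup_norm_Rk_attained[of k y]
    by (auto simp: Rk_def X_def abs_le_iff)
  moreover have "y \<in> Rk k \<and> sup_norm_Rk k y = 1" if "y \<in> PiE UNIV X" "i < k" "\<bar>y i\<bar> = 1" for y i
  proof -
    have yX: "y j \<in> X j" for j using that(1) by auto
    have "y j = 0" if "\<not> j < k" for j using yX[of j] that by (simp add: X_def)
    then have "y \<in> Rk k" by (simp add: Rk_def)
    have "\<bar>y j\<bar> \<le> 1" if "j < k" for j using yX[of j] that by (simp add: X_def abs_le_iff)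
    then show ?thesis
      using \<open>y \<in> Rk k\<close> that(2,3) assms sup_norm_Rk_le_iff[of k y 1] abs_le_sup_norm_Rk[of k i y] by auto
  qed
  ultimately have box: "{y \<in> Rk k. sup_norm_Rk k y = 1} = PiE UNIV X \<inter> (\<Union>i<k. {y. \<bar>y i\<bar> = 1})"
    by blast
  have "compact (PiE UNIV X)"
    using compactin_PiE[of "\<lambda>_. euclidean" UNIV X] by (simp add: X_def euclidean_product_topology)
  moreover have "closed {y :: nat \<Rightarrow> real. \<bar>y i\<bar> = 1}" for i
    by (intro closed_Collect_eq continuous_on_rabs continuous_on_product_coordinates) auto
  ultimately show ?thesis unfolding box by (intro compact_Int_closed closed_UN) auto
qed

context
  fixes k :: nat and N :: "(nat \<Rightarrow> real) \<Rightarrow> real"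
  assumes norm_N: "is_norm_on_Rk k N"
begin

lemma N_nonneg: "y \<in> Rk k \<Longrightarrow> N y \<ge> 0"
  and N_eq_0_iff: "y \<in> Rk k \<Longrightarrow> N y = 0 \<longleftrightarrow> y = (\<lambda>_. 0)"
  and N_scale: "y \<in> Rk k \<Longrightarrow> N (\<lambda>i. a * y i) = \<bar>a\<bar> * N y"
  and N_triangle: "y \<in> Rk k \<Longrightarrow> z \<in> Rk k \<Longrightarrow> N (\<lambda>i. y i + z i) \<le> N y + N z"
  using norm_N by (auto simp: is_norm_on_Rk_def)

lemma N_zero: "N (\<lambda>_. 0) = 0"
  using N_eq_0_iff[OF Rk_zero] by simp

lemma zero_in_unit_ball_Rk: "(\<lambda>_. 0) \<in> unit_ball_Rk k N"
  using N_zero by (simp add: unit_ball_Rk_def Rk_zero)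

lemma N_diff_commute: "y \<in> Rk k \<Longrightarrow> z \<in> Rk k \<Longrightarrow> N (\<lambda>i. y i - z i) = N (\<lambda>i. z i - y i)"
  using N_scale[OF Rk_diff[of y k z], of "-1"] by simp

lemma N_reverse_triangle: "y \<in> Rk k \<Longrightarrow> z \<in> Rk k \<Longrightarrow> \<bar>N y - N z\<bar> \<le> N (\<lambda>i. y i - z i)"
  using N_triangle[OF Rk_diff[of y k z], of z] N_triangle[OF Rk_diff[of z k y], of y]
    N_diff_commute[of y z] by auto

lemma N_sum_le:
  assumes "finite I" "\<And>i. i \<in> I \<Longrightarrow> u i \<in> Rk k"
  shows "N (\<lambda>j. \<Sum>i\<in>I. c i * u i j) \<le> (\<Sum>i\<in>I. \<bar>c i\<bar> * N (u i))"
  using assms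
proof (induction I rule: finite_induct)
  case empty
  then show ?case using N_zero by simp
next
  case (insert a F)
  have "N (\<lambda>j. \<Sum>i\<in>insert a F. c i * u i j) = N (\<lambda>j. c a * u a j + (\<Sum>i\<in>F. c i * u i j))"
    using insert by simp
  also have "\<dots> \<le> N (\<lambda>j. c a * u a j) + N (\<lambda>j. \<Sum>i\<in>F. c i * u i j)"
    using insert by (intro N_triangle Rk_scale Rk_sum) auto
  also have "\<dots> \<le> (\<Sum>i\<in>insert a F. \<bar>c i\<bar> * N (u i))"
    using insert N_scale[of "u a" "c a"] by auto
  finally show ?case .
qed

lemma N_le_sum_coords: "y \<in> Rk k \<Longrightarrow> N y \<le> (\<Sum>i<k. \<bar>y i\<bar> * N (unit_vec_Rk i))"
  using N_sum_le[of "{..<k}" unit_vec_Rk y] Rk_expand[of y] unit_vec_Rk_in_Rk by auto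

lemma continuous_on_N: "continuous_on (Rk k) N"
  unfolding continuous_on_topological
proof (intro ballI allI impI)
  fix x B assume x: "x \<in> Rk k" and B: "open B" "N x \<in> B"
  obtain e where e: "e > 0" "ball (N x) e \<subseteq> B" using B openE by blast
  define S where "S = (\<Sum>i<k. N (unit_vec_Rk i))"
  have S0: "S \<ge> 0" unfolding S_def using N_nonneg unit_vec_Rk_in_Rk by (auto intro!: sum_nonneg)
  define d where "d = e / (S + 1)"
  have d: "d > 0" using e S0 by (auto simp: d_def)
  define A where "A = (\<Inter>i<k. (\<lambda>z::nat\<Rightarrow>real. z i) -` ball (x i) d)"
  have "open A" unfolding A_def
    by (intro open_INT ballI open_vimage) (auto intro: continuous_on_product_coordinates)
  moreover have "x \<in> A" using d by (auto simp: A_def)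
  moreover have "N z \<in> B" if z: "z \<in> Rk k" "z \<in> A" for z
  proof -
    have "\<bar>N z - N x\<bar> \<le> (\<Sum>i<k. \<bar>z i - x i\<bar> * N (unit_vec_Rk i))"
      using N_reverse_triangle[OF z(1) x] N_le_sum_coords[OF Rk_diff[OF z(1) x]] by simp
    also have "\<dots> \<le> (\<Sum>i<k. d * N (unit_vec_Rk i))"
      using z(2) N_nonneg[OF unit_vec_Rk_in_Rk]
      by (intro sum_mono mult_right_mono) (auto simp: A_def dist_real_def abs_minus_commute less_imp_le)
    also have "\<dots> = d * S" by (simp add: S_def sum_distrib_left)
    also have "\<dots> < e" using e S0 by (simp add: d_def field_simps)
    finally show ?thesis using e by (auto simp: dist_real_def)
  qed
  ultimately show "\<exists>A. open A \<and> x \<in> A \<and> (\<forall>y\<in>Rk k. y \<in> A \<longrightarrow> N y \<in> B)" by blast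
qed

text \<open>N attains a positive minimum on the compact unit sphere of the sup norm.\<close>

lemma coord_le_N: "\<exists>R>0. \<forall>y\<in>Rk k. \<forall>i. \<bar>y i\<bar> \<le> R * N y"
proof (cases "k = 0")
  case True
  then show ?thesis using N_nonneg by (intro exI[of _ 1]) (auto simp: Rk_def)
next
  case False
  define S where "S = {y \<in> Rk k. sup_norm_Rk k y = 1}"
  have "unit_vec_Rk 0 \<in> S"
    using False abs_le_sup_norm_Rk[of k 0 "unit_vec_Rk 0"] sup_norm_Rk_le_iff[of k "unit_vec_Rk 0" 1]
      unit_vec_Rk_in_Rk[of 0 k] by (auto simp: S_def unit_vec_Rk_def)
  then obtain y0 where y0: "y0 \<in> S" "\<And>y. y \<in> S \<Longrightarrow> N y0 \<le> N y"
    using continuous_attains_inf[of S N] compact_Rk_unit_sphere_sup_norm[of k] False continuous_on_N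
      continuous_on_subset[of "Rk k" N S] by (auto simp: S_def)
  have "sup_norm_Rk k (\<lambda>_. 0) = 0" using sup_norm_Rk_scale[of k 0 "\<lambda>_. 0"] False by simp
  then have "y0 \<noteq> (\<lambda>_. 0)" using y0(1) by (auto simp: S_def)
  then have m: "N y0 > 0" using N_eq_0_iff N_nonneg y0(1) by (force simp: S_def)
  have "\<bar>y i\<bar> * N y0 \<le> N y" if y: "y \<in> Rk k" for y i
  proof -
    define t where "t = sup_norm_Rk k y"
    have t0: "t \<ge> 0" using sup_norm_Rk_nonneg[of k y] False by (simp add: t_def)
    have yi: "\<bar>y i\<bar> \<le> t"
      using abs_le_sup_norm_Rk[of k i y] y t0 False by (cases "i < k") (auto simp: t_def Rk_def)
    show ?thesis
    proof (cases "t = 0")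
      case True
      then show ?thesis using yi N_nonneg[OF y] by simp
    next
      case t: False
      have "sup_norm_Rk k (\<lambda>j. (1 / t) * y j) = 1"
        using sup_norm_Rk_scale[of k "1 / t" y] False t t0 by (simp add: t_def)
      then have "N y0 \<le> N (\<lambda>j. (1 / t) * y j)" using y0(2) Rk_scale[OF y, of "1 / t"] by (simp add: S_def)
      also have "\<dots> = N y / t" using N_scale[OF y, of "1 / t"] t0 by simp
      finally have "t * N y0 \<le> N y" using t t0 by (simp add: field_simps)
      moreover have "\<bar>y i\<bar> * N y0 \<le> t * N y0" using yi m by (simp add: mult_right_mono)
      ultimately show ?thesis by linarith
    qed
  qed
  then show ?thesis using m by (intro exI[of _ "1 / N y0"]) (auto simp: field_simps)
qed

end

definition mat_col_Rk :: "nat \<Rightarrow> real mat \<Rightarrow> nat \<Rightarrow> nat \<Rightarrow> real" where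
  "mat_col_Rk k M j = (\<lambda>i. if i < k then M $$ (i, j) else 0)"

lemma mat_col_Rk_in_Rk: "mat_col_Rk k M j \<in> Rk k"
  by (auto simp: mat_col_Rk_def Rk_def)

lemma abs_det_le_fact_pow:
  fixes M :: "'a::linordered_idom mat"
  assumes M: "M \<in> carrier_mat k k" and bound: "\<And>i j. i < k \<Longrightarrow> j < k \<Longrightarrow> \<bar>M $$ (i, j)\<bar> \<le> R"
  shows "\<bar>det M\<bar> \<le> fact k * R ^ k"
proof -
  have "\<bar>det M\<bar> \<le> (\<Sum>p\<in>{p. p permutes {0..<k}}. \<bar>signof p * (\<Prod>i = 0..<k. M $$ (i, p i))\<bar>)"
    unfolding det_def'[OF M] by (rule sum_abs)
  also have "\<dots> \<le> (\<Sum>p\<in>{p. p permutes {0..<k}}. R ^ k)"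
  proof (rule sum_mono)
    fix p assume p: "p \<in> {p. p permutes {0..<k}}"
    have "\<bar>signof p * (\<Prod>i = 0..<k. M $$ (i, p i))\<bar> = (\<Prod>i = 0..<k. \<bar>M $$ (i, p i)\<bar>)"
      by (simp add: abs_mult sign_def abs_prod)
    also have "\<dots> \<le> (\<Prod>i = 0..<k. R)"
      using p bound permutes_in_image[of p "{0..<k}"] by (intro prod_mono) auto
    finally show "\<bar>signof p * (\<Prod>i = 0..<k. M $$ (i, p i))\<bar> \<le> R ^ k" by simp
  qed
  also have "\<dots> = fact k * R ^ k" by (simp add: card_permutations)
  finally show ?thesis .
qed

lemma floor_divide_eq_imp_abs_diff_less:
  fixes a b s :: real
  assumes "s > 0" "\<lfloor>a / s\<rfloor> = \<lfloor>b / s\<rfloor>"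
  shows "\<bar>a - b\<bar> < s"
proof -
  have "real_of_int \<lfloor>a / s\<rfloor> = real_of_int \<lfloor>b / s\<rfloor>" using assms(2) by simp
  then have "\<bar>a / s - b / s\<bar> < 1"
    using of_int_floor_le[of "a / s"] of_int_floor_le[of "b / s"]
      real_of_int_floor_add_one_gt[of "a / s"] real_of_int_floor_add_one_gt[of "b / s"]
    unfolding abs_less_iff by linarith
  then show ?thesis using assms(1) by (simp add: diff_divide_distrib[symmetric] field_simps)
qed

lemma mult_mat_vec_adj_mat_solution:
  fixes M :: "'a::field mat"
  assumes M: "M \<in> carrier_mat k k" and det: "det M \<noteq> 0" and v: "v \<in> carrier_vec k"
  shows "M *\<^sub>v ((1 / det M) \<cdot>\<^sub>v (adj_mat M *\<^sub>v v)) = v"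
proof -
  have adj: "adj_mat M \<in> carrier_mat k k" "M * adj_mat M = det M \<cdot>\<^sub>m 1\<^sub>m k"
    using adj_mat[OF M] by auto
  have "M *\<^sub>v ((1 / det M) \<cdot>\<^sub>v (adj_mat M *\<^sub>v v)) = (1 / det M) \<cdot>\<^sub>v (M *\<^sub>v (adj_mat M *\<^sub>v v))"
    using M adj v by (simp add: mult_mat_vec)
  also have "M *\<^sub>v (adj_mat M *\<^sub>v v) = (M * adj_mat M) *\<^sub>v v" using M adj(1) v by simp
  also have "\<dots> = det M \<cdot>\<^sub>v v" using adj v by auto
  also have "(1 / det M) \<cdot>\<^sub>v (det M \<cdot>\<^sub>v v) = v" using det by (simp add: smult_smult_assoc)
  finally show ?thesis .
qed

text \<open>Pigeonhole on a grid of mesh s in [-2, 2]^k.\<close>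

lemma exists_coord_grid_net:
  fixes x :: "'b \<Rightarrow> nat \<Rightarrow> real"
  assumes s: "s > 0" and bound: "\<And>y j. y \<in> B \<Longrightarrow> j < k \<Longrightarrow> \<bar>x y j\<bar> \<le> 2"
  obtains Y where "Y \<subseteq> B" "finite Y" "card Y \<le> (nat \<lfloor>4 / s\<rfloor> + 1) ^ k"
    "\<And>y. y \<in> B \<Longrightarrow> \<exists>y'\<in>Y. \<forall>j<k. \<bar>x y j - x y' j\<bar> \<le> s"
proof -
  define Q where "Q = nat \<lfloor>4 / s\<rfloor>"
  define idx where "idx y = restrict (\<lambda>j. nat \<lfloor>(x y j + 2) / s\<rfloor>) {..<k}" for y
  have "idx y \<in> PiE {..<k} (\<lambda>_. {0..Q})" if y: "y \<in> B" for y
  proof -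
    have "(x y j + 2) / s \<le> 4 / s" if "j < k" for j
      using bound[OF y that] s by (intro divide_right_mono) auto
    then show ?thesis unfolding idx_def Q_def by (auto intro!: nat_mono floor_mono)
  qed
  then have idx: "idx ` B \<subseteq> PiE {..<k} (\<lambda>_. {0..Q})" by blast
  define rep where "rep g = (SOME y. y \<in> B \<and> idx y = g)" for g
  have rep: "rep (idx y) \<in> B" "idx (rep (idx y)) = idx y" if "y \<in> B" for y
    using someI[of "\<lambda>y'. y' \<in> B \<and> idx y' = idx y" y] that unfolding rep_def by auto
  have fin: "finite (idx ` B)" using finite_subset[OF idx] by (simp add: finite_PiE)
  have "card (rep ` idx ` B) \<le> card (PiE {..<k} (\<lambda>_. {0..Q}))"
    using card_image_le[OF fin, of rep] card_mono[OF _ idx] by (simp add: finite_PiE)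
  also have "\<dots> = (Q + 1) ^ k" by (simp add: card_PiE)
  finally have card: "card (rep ` idx ` B) \<le> (Q + 1) ^ k" .
  have close: "\<bar>x y j - x (rep (idx y)) j\<bar> \<le> s" if y: "y \<in> B" and j: "j < k" for y j
  proof -
    have "nat \<lfloor>(x y j + 2) / s\<rfloor> = nat \<lfloor>(x (rep (idx y)) j + 2) / s\<rfloor>"
      using fun_cong[OF rep(2)[OF y], of j] j by (simp add: idx_def)
    moreover have "\<lfloor>(x y j + 2) / s\<rfloor> \<ge> 0" "\<lfloor>(x (rep (idx y)) j + 2) / s\<rfloor> \<ge> 0"
      using bound[OF y j] bound[OF rep(1)[OF y] j] s by auto
    ultimately have "\<lfloor>(x y j + 2) / s\<rfloor> = \<lfloor>(x (rep (idx y)) j + 2) / s\<rfloor>" by (metis eq_nat_nat_iff)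
    from floor_divide_eq_imp_abs_diff_less[OF s this] show ?thesis by simp
  qed
  show ?thesis
  proof (rule that[of "rep ` idx ` B"])
    show "rep ` idx ` B \<subseteq> B" using rep by blast
    show "finite (rep ` idx ` B)" using fin by simp
    show "card (rep ` idx ` B) \<le> (nat \<lfloor>4 / s\<rfloor> + 1) ^ k" using card by (simp add: Q_def)
    show "\<exists>y'\<in>rep ` idx ` B. \<forall>j<k. \<bar>x y j - x y' j\<bar> \<le> s" if "y \<in> B" for y
      using close that by blast
  qed
qed

context
  fixes k :: nat and N :: "(nat \<Rightarrow> real) \<Rightarrow> real"
  assumes norm_N: "is_norm_on_Rk k N"
begin

lemma exists_unit_ball_basis:
  "\<exists>M\<in>carrier_mat k k. (\<forall>j<k. mat_col_Rk k M j \<in> unit_ball_Rk k N) \<and> det M > 0"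
proof -
  have Npos: "N (unit_vec_Rk i) > 0" if "i < k" for i
  proof -
    have "unit_vec_Rk i \<noteq> (\<lambda>_. 0)" by (metis unit_vec_Rk_def zero_neq_one)
    then show ?thesis
      using N_nonneg[OF norm_N unit_vec_Rk_in_Rk[OF that]] N_eq_0_iff[OF norm_N unit_vec_Rk_in_Rk[OF that]]
      by linarith
  qed
  define M where "M = mat k k (\<lambda>(i, j). if i = j then 1 / N (unit_vec_Rk i) else (0::real))"
  have M: "M \<in> carrier_mat k k" by (simp add: M_def)
  have "mat_col_Rk k M j = (\<lambda>i. (1 / N (unit_vec_Rk j)) * unit_vec_Rk j i)" if "j < k" for j
    using that by (auto simp: mat_col_Rk_def M_def unit_vec_Rk_def fun_eq_iff)
  then have cols: "mat_col_Rk k M j \<in> unit_ball_Rk k N" if "j < k" for j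
    using that N_scale[OF norm_N unit_vec_Rk_in_Rk[OF that], of "1 / N (unit_vec_Rk j)"] Npos[OF that]
      Rk_scale[OF unit_vec_Rk_in_Rk[OF that], of "1 / N (unit_vec_Rk j)"]
    by (simp add: unit_ball_Rk_def)
  have "upper_triangular M" by (auto simp: upper_triangular_def M_def)
  then have "det M = prod_list (diag_mat M)" using det_upper_triangular M by blast
  also have "\<dots> = (\<Prod>i\<in>{0..<k}. 1 / N (unit_vec_Rk i))"
    by (simp add: diag_mat_def M_def prod.distinct_set_conv_list[symmetric] cong: map_cong)
  finally have "det M > 0" using Npos by (auto intro!: prod_pos)
  then show ?thesis using M cols by blast
qed

lemma exists_near_max_det_basis:
  "\<exists>M\<in>carrier_mat k k. (\<forall>j<k. mat_col_Rk k M j \<in> unit_ball_Rk k N) \<and> det M \<noteq> 0 \<and>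
     (\<forall>M'\<in>carrier_mat k k. (\<forall>j<k. mat_col_Rk k M' j \<in> unit_ball_Rk k N) \<longrightarrow>
        \<bar>det M'\<bar> \<le> 2 * \<bar>det M\<bar>)"
proof -
  define good where
    "good M \<longleftrightarrow> M \<in> carrier_mat k k \<and> (\<forall>j<k. mat_col_Rk k M j \<in> unit_ball_Rk k N)" for M
  define D where "D = {\<bar>det M\<bar> | M. good M}"
  obtain R where R: "R > 0" "\<And>y i. y \<in> Rk k \<Longrightarrow> \<bar>y i\<bar> \<le> R * N y"
    using coord_le_N[OF norm_N] by blast
  have "\<bar>M $$ (i, j)\<bar> \<le> R" if "good M" "i < k" "j < k" for M i j
  proof -
    have "\<bar>M $$ (i, j)\<bar> \<le> R * N (mat_col_Rk k M j)"
      using R(2)[OF mat_col_Rk_in_Rk, of M j i] that(2) by (simp add: mat_col_Rk_def)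
    also have "\<dots> \<le> R" using that R(1) by (simp add: good_def unit_ball_Rk_def)
    finally show ?thesis .
  qed
  then have "\<bar>det M\<bar> \<le> fact k * R ^ k" if "good M" for M
    using that by (intro abs_det_le_fact_pow) (auto simp: good_def)
  then have bdd: "bdd_above D" unfolding D_def by (intro bdd_aboveI[of _ "fact k * R ^ k"]) auto
  obtain M0 where "good M0" "det M0 > 0" using exists_unit_ball_basis by (auto simp: good_def)
  then have "Sup D > 0" using abs_of_pos[of "det M0"] cSup_upper[OF _ bdd] unfolding D_def by fastforce
  moreover have "D \<noteq> {}" using \<open>good M0\<close> by (auto simp: D_def)
  ultimately obtain d where "d \<in> D" "Sup D / 2 < d" using less_cSupD[of D "Sup D / 2"] by auto
  then obtain M where M: "good M" "Sup D / 2 < \<bar>det M\<bar>" by (auto simp: D_def)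
  have "\<bar>det M'\<bar> \<le> 2 * \<bar>det M\<bar>" if "good M'" for M'
  proof -
    have "\<bar>det M'\<bar> \<le> Sup D" using cSup_upper[OF _ bdd] that by (auto simp: D_def)
    then show ?thesis using M(2) by linarith
  qed
  then show ?thesis using M \<open>Sup D > 0\<close> unfolding good_def by (intro bexI[of _ M]) auto
qed

text \<open>Cramer's rule expresses the coordinates of y in the basis above as ratios of determinants
  of matrices whose columns lie in the unit ball, hence they are bounded by 2.\<close>

lemma unit_ball_Rk_coords_le_2:
  "\<exists>M\<in>carrier_mat k k. (\<forall>j<k. mat_col_Rk k M j \<in> unit_ball_Rk k N) \<and>
     (\<forall>y\<in>unit_ball_Rk k N. \<exists>x. y = (\<lambda>i. \<Sum>j<k. x j * mat_col_Rk k M j i) \<and> (\<forall>j<k. \<bar>x j\<bar> \<le> 2))"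
proof -
  obtain M where M: "M \<in> carrier_mat k k" "\<forall>j<k. mat_col_Rk k M j \<in> unit_ball_Rk k N"
    and detM: "det M \<noteq> 0"
    and max: "\<And>M'. M' \<in> carrier_mat k k \<Longrightarrow> \<forall>j<k. mat_col_Rk k M' j \<in> unit_ball_Rk k N \<Longrightarrow>
        \<bar>det M'\<bar> \<le> 2 * \<bar>det M\<bar>"
    using exists_near_max_det_basis by blast
  have "\<exists>x. y = (\<lambda>i. \<Sum>j<k. x j * mat_col_Rk k M j i) \<and> (\<forall>j<k. \<bar>x j\<bar> \<le> 2)"
    if yB: "y \<in> unit_ball_Rk k N" for y
  proof -
    have yR: "y \<in> Rk k" using yB by (simp add: unit_ball_Rk_def)
    define v where "v = vec k y"
    define x where "x = (1 / det M) \<cdot>\<^sub>v (adj_mat M *\<^sub>v v)"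
    have x: "x \<in> carrier_vec k" using adj_mat[OF M(1)] by (simp add: x_def v_def)
    have Mx: "M *\<^sub>v x = v" unfolding x_def v_def by (rule mult_mat_vec_adj_mat_solution[OF M(1) detM]) simp
    have "\<bar>x $ j\<bar> \<le> 2" if j: "j < k" for j
    proof -
      have "mat_col_Rk k (replace_col M v j) j' = (if j' = j then y else mat_col_Rk k M j')"
        if "j' < k" for j'
        using M(1) that yR by (auto simp: mat_col_Rk_def replace_col_def v_def fun_eq_iff Rk_def)
      then have "\<forall>j'<k. mat_col_Rk k (replace_col M v j) j' \<in> unit_ball_Rk k N"
        using M(2) yB by simp
      then have "\<bar>det (replace_col M v j)\<bar> \<le> 2 * \<bar>det M\<bar>"
        using M(1) by (intro max) (auto simp: replace_col_def)
      moreover have "det (replace_col M v j) = x $ j * det M"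
        using cramer_lemma_mat[OF M(1) x j] Mx by simp
      ultimately show ?thesis using detM by (simp add: abs_mult)
    qed
    moreover have "y i = (\<Sum>j<k. x $ j * mat_col_Rk k M j i)" for i
    proof (cases "i < k")
      case True
      then have "y i = (M *\<^sub>v x) $ i" using Mx by (simp add: v_def)
      also have "\<dots> = (\<Sum>j<k. M $$ (i, j) * x $ j)"
        using M(1) x True by (simp add: scalar_prod_def row_def lessThan_atLeast0)
      finally show ?thesis using True by (simp add: mat_col_Rk_def mult.commute)
    qed (use yR in \<open>simp add: mat_col_Rk_def Rk_def\<close>)
    ultimately show ?thesis by (intro exI[of _ "\<lambda>j. x $ j"]) auto
  qed
  then show ?thesis using M by blast
qed

text \<open>Round the coordinates in the basis above to a grid of mesh \<rho>/k.\<close>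

lemma unit_ball_Rk_finite_net:
  assumes k: "k \<ge> 1" and \<rho>: "\<rho> > 0"
  obtains Y where "Y \<subseteq> unit_ball_Rk k N" "finite Y" "card Y \<le> (nat \<lfloor>4 * real k / \<rho>\<rfloor> + 1) ^ k"
    "\<And>y. y \<in> unit_ball_Rk k N \<Longrightarrow> \<exists>y'\<in>Y. N (\<lambda>i. y i - y' i) \<le> \<rho>"
proof -
  let ?B = "unit_ball_Rk k N"
  obtain M where M: "\<forall>j<k. mat_col_Rk k M j \<in> ?B"
    and coords: "\<forall>y\<in>?B. \<exists>x. y = (\<lambda>i. \<Sum>j<k. x j * mat_col_Rk k M j i) \<and> (\<forall>j<k. \<bar>x j\<bar> \<le> 2)"
    using unit_ball_Rk_coords_le_2 by blast
  define x where "x y = (SOME x. y = (\<lambda>i. \<Sum>j<k. x j * mat_col_Rk k M j i) \<and> (\<forall>j<k. \<bar>x j\<bar> \<le> 2))"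
    for y
  have x: "y = (\<lambda>i. \<Sum>j<k. x y j * mat_col_Rk k M j i)" "\<And>j. j < k \<Longrightarrow> \<bar>x y j\<bar> \<le> 2"
    if "y \<in> ?B" for y
    using someI_ex[OF coords[rule_format, OF that]] unfolding x_def by blast+
  define s where "s = \<rho> / real k"
  have s: "s > 0" using k \<rho> by (simp add: s_def)
  obtain Y where Y: "Y \<subseteq> ?B" "finite Y" "card Y \<le> (nat \<lfloor>4 / s\<rfloor> + 1) ^ k"
    and close: "\<And>y. y \<in> ?B \<Longrightarrow> \<exists>y'\<in>Y. \<forall>j<k. \<bar>x y j - x y' j\<bar> \<le> s"
    using exists_coord_grid_net[OF s, of ?B k x] x(2) by blast
  have "\<exists>y'\<in>Y. N (\<lambda>i. y i - y' i) \<le> \<rho>" if y: "y \<in> ?B" for y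
  proof -
    obtain y' where y': "y' \<in> Y" "\<And>j. j < k \<Longrightarrow> \<bar>x y j - x y' j\<bar> \<le> s" using close[OF y] by blast
    then have "y' \<in> ?B" using Y(1) by blast
    then have "(\<lambda>i. y i - y' i) = (\<lambda>i. \<Sum>j<k. (x y j - x y' j) * mat_col_Rk k M j i)"
      using x(1)[OF y] x(1)[of y'] by (simp add: fun_eq_iff sum_subtractf left_diff_distrib)
    then have "N (\<lambda>i. y i - y' i) \<le> (\<Sum>j<k. \<bar>x y j - x y' j\<bar> * N (mat_col_Rk k M j))"
      using N_sum_le[OF norm_N, of "{..<k}" "mat_col_Rk k M"] mat_col_Rk_in_Rk by simp
    also have "\<dots> \<le> (\<Sum>j<k. s * 1)"
      using y'(2) M N_nonneg[OF norm_N mat_col_Rk_in_Rk] s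
      by (intro sum_mono mult_mono) (auto simp: unit_ball_Rk_def)
    also have "\<dots> = \<rho>" using k by (simp add: s_def)
    finally show ?thesis using y'(1) by blast
  qed
  moreover have "4 / s = 4 * real k / \<rho>" by (simp add: s_def)
  ultimately show ?thesis using that Y by simp
qed

end

section \<open>Radius, entropy numbers and Lipschitz widths\<close>

lemma bdd_above_dists:
  fixes K :: "'a::real_normed_vector set"
  assumes "bounded K"
  shows "bdd_above (insert 0 ((\<lambda>f. norm (f - g)) ` K))"
proof -
  obtain R where R: "\<And>f. f \<in> K \<Longrightarrow> norm f \<le> R" using assms bounded_iff by blast
  have "norm (f - g) \<le> max 0 (R + norm g)" if "f \<in> K" for f
    using norm_triangle_ineq4[of f g] R[OF that] by linarith
  then show ?thesis by (intro bdd_aboveI[of _ "max 0 (R + norm g)"]) auto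
qed

lemma rad_nonneg:
  fixes K :: "'a::real_normed_vector set"
  assumes "bounded K"
  shows "rad K \<ge> 0"
  unfolding rad_def using cSup_upper[OF insertI1 bdd_above_dists[OF assms]]
  by (intro cInf_greatest) auto

lemma exists_center_within_rad:
  fixes K :: "'a::real_normed_vector set"
  assumes "bounded K" "\<eta> > 0"
  obtains g where "\<And>f. f \<in> K \<Longrightarrow> norm (f - g) \<le> rad K + \<eta>"
proof -
  have "Inf ((\<lambda>g. Sup (insert 0 ((\<lambda>f. norm (f - g)) ` K))) ` UNIV) < rad K + \<eta>"
    using assms(2) unfolding rad_def by simp
  then obtain g where g: "Sup (insert 0 ((\<lambda>f. norm (f - g)) ` K)) < rad K + \<eta>"
    using cInf_lessD[of "(\<lambda>g. Sup (insert 0 ((\<lambda>f. norm (f - g)) ` K))) ` UNIV"] by blast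
  have "norm (f - g) \<le> rad K + \<eta>" if "f \<in> K" for f
    using cSup_upper[OF _ bdd_above_dists[OF assms(1)], of "norm (f - g)" g] that g by force
  then show ?thesis by (rule that)
qed

lemma entropy_number_le:
  assumes "eps > 0" "finite S" "card S \<le> 2 ^ m" "K \<subseteq> (\<Union>c\<in>S. cball c eps)"
  shows "entropy_number K m \<le> eps"
  unfolding entropy_number_def using assms by (intro cInf_lower) (auto intro: bdd_belowI[of _ 0])

lemma entropy_number_ge:
  fixes K :: "'a::real_normed_vector set"
  assumes "bounded K"
    and "\<And>eps S. eps > 0 \<Longrightarrow> finite S \<Longrightarrow> card S \<le> 2 ^ m \<Longrightarrow> K \<subseteq> (\<Union>c\<in>S. cball c eps) \<Longrightarrow> a \<le> eps"
  shows "a \<le> entropy_number K m"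
  unfolding entropy_number_def
proof (rule cInf_greatest)
  obtain R where "R > 0" "\<And>f. f \<in> K \<Longrightarrow> norm f \<le> R" using assms(1) bounded_pos by blast
  then have "K \<subseteq> (\<Union>c\<in>{0}. cball c R)" by (auto simp: dist_norm)
  then have "R \<in> {eps. eps > 0 \<and> (\<exists>S. finite S \<and> card S \<le> 2 ^ m \<and> K \<subseteq> (\<Union>c\<in>S. cball c eps))}"
    using \<open>R > 0\<close> by (intro CollectI conjI exI[of _ "{0}"]) auto
  then show "{eps. eps > 0 \<and> (\<exists>S. finite S \<and> card S \<le> 2 ^ m \<and> K \<subseteq> (\<Union>c\<in>S. cball c eps))} \<noteq> {}"
    by blast
qed (use assms(2) in blast)

definition lipschitz_on_unit_ball_Rk ::
    "real \<Rightarrow> nat \<Rightarrow> ((nat \<Rightarrow> real) \<Rightarrow> real) \<Rightarrow> ((nat \<Rightarrow> real) \<Rightarrow> 'a::real_normed_vector) \<Rightarrow> bool" where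
  "lipschitz_on_unit_ball_Rk \<gamma> k N \<Phi> \<longleftrightarrow>
     (\<forall>y\<in>unit_ball_Rk k N. \<forall>y'\<in>unit_ball_Rk k N. norm (\<Phi> y - \<Phi> y') \<le> \<gamma> * N (\<lambda>i. y i - y' i))"

definition worst_case_error :: "'a::real_normed_vector set \<Rightarrow> 'b set \<Rightarrow> ('b \<Rightarrow> 'a) \<Rightarrow> real" where
  "worst_case_error K B \<Phi> = Sup (insert 0 ((\<lambda>f. Inf ((\<lambda>y. norm (f - \<Phi> y)) ` B)) ` K))"

lemma fixed_lipschitz_width_eq_Inf:
  "fixed_lipschitz_width \<gamma> K k N =
     Inf {worst_case_error K (unit_ball_Rk k N) \<Phi> | \<Phi>. lipschitz_on_unit_ball_Rk \<gamma> k N \<Phi>}"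
  by (simp add: fixed_lipschitz_width_def worst_case_error_def lipschitz_on_unit_ball_Rk_def)

lemma Inf_dists_le: "y \<in> B \<Longrightarrow> Inf ((\<lambda>y. norm (f - \<Phi> y)) ` B) \<le> norm (f - \<Phi> y)"
  by (intro cInf_lower) (auto intro: bdd_belowI[of _ 0])

lemma worst_case_error_le:
  assumes "r \<ge> 0" "\<And>f. f \<in> K \<Longrightarrow> \<exists>y\<in>B. norm (f - \<Phi> y) \<le> r"
  shows "worst_case_error K B \<Phi> \<le> r"
  unfolding worst_case_error_def
proof (rule cSup_least)
  fix x assume "x \<in> insert 0 ((\<lambda>f. Inf ((\<lambda>y. norm (f - \<Phi> y)) ` B)) ` K)"
  then consider "x = 0" | f where "f \<in> K" "x = Inf ((\<lambda>y. norm (f - \<Phi> y)) ` B)" by blast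
  then show "x \<le> r"
  proof cases
    case 2
    then obtain y where "y \<in> B" "norm (f - \<Phi> y) \<le> r" using assms(2) by blast
    then show ?thesis using 2 Inf_dists_le[of y B f \<Phi>] by linarith
  qed (use assms(1) in simp)
qed simp

lemma bdd_above_worst_case_error:
  fixes K :: "'a::real_normed_vector set"
  assumes "bounded K" "b \<in> B"
  shows "bdd_above (insert 0 ((\<lambda>f. Inf ((\<lambda>y. norm (f - \<Phi> y)) ` B)) ` K))"
proof -
  obtain R where R: "\<And>x. x \<in> insert 0 ((\<lambda>f. norm (f - \<Phi> b)) ` K) \<Longrightarrow> x \<le> R"
    using bdd_above_dists[OF assms(1), of "\<Phi> b"] by (auto simp: bdd_above_def)
  have "Inf ((\<lambda>y. norm (f - \<Phi> y)) ` B) \<le> R" if "f \<in> K" for f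
    using Inf_dists_le[OF assms(2), of f \<Phi>] R[of "norm (f - \<Phi> b)"] that by fastforce
  then show ?thesis using R[of 0] by (intro bdd_aboveI[of _ R]) auto
qed

lemma worst_case_error_nonneg:
  fixes K :: "'a::real_normed_vector set"
  assumes "bounded K" "b \<in> B"
  shows "worst_case_error K B \<Phi> \<ge> 0"
  unfolding worst_case_error_def by (rule cSup_upper[OF insertI1 bdd_above_worst_case_error[OF assms]])

lemma worst_case_error_lessD:
  fixes K :: "'a::real_normed_vector set"
  assumes "bounded K" "b \<in> B" "worst_case_error K B \<Phi> < \<delta>" "f \<in> K"
  shows "\<exists>y\<in>B. norm (f - \<Phi> y) < \<delta>"
proof -
  have "Inf ((\<lambda>y. norm (f - \<Phi> y)) ` B) \<le> worst_case_error K B \<Phi>"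
    unfolding worst_case_error_def using assms(4)
    by (intro cSup_upper[OF _ bdd_above_worst_case_error[OF assms(1,2)]]) blast
  then show ?thesis
    using assms(2,3) cInf_lessD[of "(\<lambda>y. norm (f - \<Phi> y)) ` B" \<delta>] by fastforce
qed

context
  fixes k :: nat and N :: "(nat \<Rightarrow> real) \<Rightarrow> real"
  assumes norm_N: "is_norm_on_Rk k N"
begin

lemma lipschitz_on_unit_ball_Rk_const:
  "\<gamma> \<ge> 0 \<Longrightarrow> lipschitz_on_unit_ball_Rk \<gamma> k N (\<lambda>_. g)"
  using N_nonneg[OF norm_N Rk_diff] by (auto simp: lipschitz_on_unit_ball_Rk_def unit_ball_Rk_def)

lemma worst_case_error_set_bdd_below:
  fixes K :: "'a::real_normed_vector set"
  assumes "bounded K"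
  shows "bdd_below {worst_case_error K (unit_ball_Rk k N) \<Phi> | \<Phi>. lipschitz_on_unit_ball_Rk \<gamma> k N \<Phi>}"
  using worst_case_error_nonneg[OF assms zero_in_unit_ball_Rk[OF norm_N]]
  by (intro bdd_belowI[of _ 0]) blast

lemma fixed_lipschitz_width_nonneg:
  fixes K :: "'a::real_normed_vector set"
  assumes "bounded K" "\<gamma> \<ge> 0"
  shows "fixed_lipschitz_width \<gamma> K k N \<ge> 0"
  unfolding fixed_lipschitz_width_eq_Inf
  using lipschitz_on_unit_ball_Rk_const[OF assms(2)]
    worst_case_error_nonneg[OF assms(1) zero_in_unit_ball_Rk[OF norm_N]]
  by (intro cInf_greatest) blast+

lemma fixed_lipschitz_width_le:
  fixes K :: "'a::real_normed_vector set"
  assumes "bounded K" "lipschitz_on_unit_ball_Rk \<gamma> k N \<Phi>"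
  shows "fixed_lipschitz_width \<gamma> K k N \<le> worst_case_error K (unit_ball_Rk k N) \<Phi>"
  unfolding fixed_lipschitz_width_eq_Inf
  using assms by (intro cInf_lower worst_case_error_set_bdd_below) blast+

lemma fixed_lipschitz_width_lessE:
  fixes K :: "'a::real_normed_vector set"
  assumes "\<gamma> \<ge> 0" "fixed_lipschitz_width \<gamma> K k N < \<delta>"
  obtains \<Phi> where "lipschitz_on_unit_ball_Rk \<gamma> k N \<Phi>" "worst_case_error K (unit_ball_Rk k N) \<Phi> < \<delta>"
  using assms lipschitz_on_unit_ball_Rk_const[OF assms(1)]
    cInf_lessD[of "{worst_case_error K (unit_ball_Rk k N) \<Phi> | \<Phi>. lipschitz_on_unit_ball_Rk \<gamma> k N \<Phi>}" \<delta>]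
  unfolding fixed_lipschitz_width_eq_Inf by blast

end

lemma lipschitz_width_le:
  fixes K :: "'a::real_normed_vector set"
  assumes K: "bounded K" and \<gamma>: "\<gamma> \<ge> 0" and k: "1 \<le> k" "k \<le> n" and norm_N: "is_norm_on_Rk k N"
    and lip: "lipschitz_on_unit_ball_Rk \<gamma> k N \<Phi>" and r: "r \<ge> 0"
    and approx: "\<And>f. f \<in> K \<Longrightarrow> \<exists>y\<in>unit_ball_Rk k N. norm (f - \<Phi> y) \<le> r"
  shows "lipschitz_width \<gamma> K n \<le> r"
proof -
  have "lipschitz_width \<gamma> K n \<le> fixed_lipschitz_width \<gamma> K k N"
    unfolding lipschitz_width_def using k norm_N fixed_lipschitz_width_nonneg[OF _ K \<gamma>]
    by (intro cInf_lower bdd_belowI[of _ 0]) blast+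
  also have "\<dots> \<le> worst_case_error K (unit_ball_Rk k N) \<Phi>"
    by (rule fixed_lipschitz_width_le[OF norm_N K lip])
  also have "\<dots> \<le> r" by (rule worst_case_error_le[OF r approx])
  finally show ?thesis .
qed

lemma lipschitz_width_lessE:
  fixes K :: "'a::real_normed_vector set"
  assumes K: "bounded K" and \<gamma>: "\<gamma> \<ge> 0" and n: "n \<ge> 1" and less: "lipschitz_width \<gamma> K n < \<delta>"
  obtains k N \<Phi> where "1 \<le> k" "k \<le> n" "is_norm_on_Rk k N" "lipschitz_on_unit_ball_Rk \<gamma> k N \<Phi>"
    "\<And>f. f \<in> K \<Longrightarrow> \<exists>y\<in>unit_ball_Rk k N. norm (f - \<Phi> y) < \<delta>"
proof -
  have "fixed_lipschitz_width \<gamma> K n (sup_norm_Rk n) \<in>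
      {fixed_lipschitz_width \<gamma> K k N | k N. 1 \<le> k \<and> k \<le> n \<and> is_norm_on_Rk k N}"
    using n is_norm_sup_norm_Rk[OF n] by blast
  then obtain k N where kN: "1 \<le> k" "k \<le> n" "is_norm_on_Rk k N"
    and "fixed_lipschitz_width \<gamma> K k N < \<delta>"
    using less cInf_lessD[of "{fixed_lipschitz_width \<gamma> K k N | k N. 1 \<le> k \<and> k \<le> n \<and> is_norm_on_Rk k N}"]
    unfolding lipschitz_width_def by blast
  then obtain \<Phi> where "lipschitz_on_unit_ball_Rk \<gamma> k N \<Phi>" "worst_case_error K (unit_ball_Rk k N) \<Phi> < \<delta>"
    using fixed_lipschitz_width_lessE[OF kN(3) \<gamma>] by blast
  then show ?thesis
    using that[OF kN] worst_case_error_lessD[OF K zero_in_unit_ball_Rk[OF kN(3)]] by blast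
qed

section \<open>Upper bound by entropy numbers\<close>

definition sign_vectors :: "nat \<Rightarrow> (nat \<Rightarrow> real) set" where
  "sign_vectors n = {v \<in> Rk n. \<forall>i<n. \<bar>v i\<bar> = 1}"

definition sign_vec :: "nat \<Rightarrow> (nat \<Rightarrow> real) \<Rightarrow> nat \<Rightarrow> real" where
  "sign_vec n y = (\<lambda>i. if i < n then if y i < 0 then -1 else 1 else 0)"

lemma finite_sign_vectors: "finite (sign_vectors n)"
  and card_sign_vectors: "card (sign_vectors n) = 2 ^ n"
proof -
  define ext where "ext p = (\<lambda>i. if i < n then p i else (0::real))" for p :: "nat \<Rightarrow> real"
  let ?P = "PiE {..<n} (\<lambda>_. {-1, 1::real})"
  have "v \<in> ext ` ?P" if "v \<in> sign_vectors n" for v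
  proof -
    have "v = ext (restrict v {..<n})" using that by (auto simp: sign_vectors_def Rk_def ext_def)
    moreover have "restrict v {..<n} \<in> ?P" using that by (auto simp: sign_vectors_def abs_if split: if_splits)
    ultimately show ?thesis by blast
  qed
  moreover have "ext ` ?P \<subseteq> sign_vectors n" by (auto simp: sign_vectors_def Rk_def ext_def PiE_def Pi_def)
  ultimately have eq: "sign_vectors n = ext ` ?P" by blast
  have "inj_on ext ?P"
  proof (rule inj_onI)
    fix v w assume vw: "v \<in> ?P" "w \<in> ?P" "ext v = ext w"
    show "v = w"
    proof (rule PiE_ext[OF vw(1,2)])
      fix i assume "i \<in> {..<n}"
      then show "v i = w i" using fun_cong[OF vw(3), of i] by (simp add: ext_def)
    qed
  qed
  then show "card (sign_vectors n) = 2 ^ n" unfolding eq by (simp add: card_image card_PiE numeral_2_eq_2)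
  show "finite (sign_vectors n)" unfolding eq by (simp add: finite_PiE)
qed

context
  fixes n :: nat
  assumes n_pos: "n \<ge> 1"
begin

lemma sign_vectors_subset_unit_ball: "sign_vectors n \<subseteq> unit_ball_Rk n (sup_norm_Rk n)"
  using sup_norm_Rk_le_iff[OF n_pos] by (auto simp: sign_vectors_def unit_ball_Rk_def)

lemma sign_vec_sign_vector: "v \<in> sign_vectors n \<Longrightarrow> sign_vec n v = v"
  by (auto simp: sign_vectors_def sign_vec_def Rk_def fun_eq_iff abs_if split: if_splits)

lemma min_abs_Rk_sign_vector: "v \<in> sign_vectors n \<Longrightarrow> min_abs_Rk n v = 1"
  using min_abs_Rk_attained[OF n_pos, of v] by (auto simp: sign_vectors_def)

text \<open>The weight \<^term>\<open>min_abs_Rk n y\<close> vanishes wherever the sign pattern of y changes, which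
  makes this map Lipschitz although \<^term>\<open>sign_vec n\<close> is discontinuous.\<close>

lemma lipschitz_sign_pattern_map:
  fixes q :: "(nat \<Rightarrow> real) \<Rightarrow> 'a::real_normed_vector"
  assumes \<gamma>: "\<gamma> \<ge> 0" and q: "\<And>v. norm (q v) \<le> \<gamma>"
  shows "norm ((g + min_abs_Rk n y *\<^sub>R q (sign_vec n y)) - (g + min_abs_Rk n y' *\<^sub>R q (sign_vec n y')))
           \<le> \<gamma> * sup_norm_Rk n (\<lambda>i. y i - y' i)"
proof (cases "sign_vec n y = sign_vec n y'")
  case True
  have "norm ((g + min_abs_Rk n y *\<^sub>R q (sign_vec n y)) - (g + min_abs_Rk n y' *\<^sub>R q (sign_vec n y')))
      = \<bar>min_abs_Rk n y - min_abs_Rk n y'\<bar> * norm (q (sign_vec n y))"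
    by (simp add: True flip: scaleR_diff_left)
  also have "\<dots> \<le> sup_norm_Rk n (\<lambda>i. y i - y' i) * \<gamma>"
    using min_abs_Rk_lipschitz[OF n_pos, of y y'] q by (intro mult_mono) auto
  finally show ?thesis by (simp add: mult.commute)
next
  case False
  then obtain i where i: "i < n" "(y i < 0) \<noteq> (y' i < 0)"
    by (auto simp: sign_vec_def fun_eq_iff split: if_splits)
  have m: "0 \<le> min_abs_Rk n y" "min_abs_Rk n y \<le> \<bar>y i\<bar>" "0 \<le> min_abs_Rk n y'" "min_abs_Rk n y' \<le> \<bar>y' i\<bar>"
    using min_abs_Rk_nonneg[OF n_pos] min_abs_Rk_le[OF n_pos i(1)] by auto
  have "norm ((g + min_abs_Rk n y *\<^sub>R q (sign_vec n y)) - (g + min_abs_Rk n y' *\<^sub>R q (sign_vec n y')))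
      \<le> min_abs_Rk n y * norm (q (sign_vec n y)) + min_abs_Rk n y' * norm (q (sign_vec n y'))"
    using norm_triangle_ineq4[of "min_abs_Rk n y *\<^sub>R q (sign_vec n y)" "min_abs_Rk n y' *\<^sub>R q (sign_vec n y')"] m
    by simp
  also have "\<dots> \<le> (\<bar>y i\<bar> + \<bar>y' i\<bar>) * \<gamma>"
    unfolding distrib_right by (intro add_mono mult_mono) (use m q \<gamma> in auto)
  also have "\<bar>y i\<bar> + \<bar>y' i\<bar> = \<bar>y i - y' i\<bar>" using i(2) by auto
  also have "\<bar>y i - y' i\<bar> * \<gamma> \<le> \<gamma> * sup_norm_Rk n (\<lambda>i. y i - y' i)"
    using abs_le_sup_norm_Rk[OF n_pos i(1), of "\<lambda>i. y i - y' i"] \<gamma> by (simp add: mult.commute mult_left_mono)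
  finally show ?thesis .
qed

lemma lipschitz_map_through_points:
  fixes P :: "'a::real_normed_vector set"
  assumes \<gamma>: "\<gamma> \<ge> 0" and P: "finite P" "card P \<le> 2 ^ n" "\<And>p. p \<in> P \<Longrightarrow> norm (p - g) \<le> \<gamma>"
  obtains \<Phi> where "lipschitz_on_unit_ball_Rk \<gamma> n (sup_norm_Rk n) \<Phi>"
    "P \<subseteq> \<Phi> ` unit_ball_Rk n (sup_norm_Rk n)"
proof -
  have "card P \<le> card (sign_vectors n)" using P(2) card_sign_vectors by simp
  then obtain h where h: "h ` P \<subseteq> sign_vectors n" "inj_on h P"
    using card_le_inj[OF P(1) finite_sign_vectors] by blast
  define q where "q v = (if v \<in> h ` P then the_inv_into P h v - g else 0)" for v
  have q: "norm (q v) \<le> \<gamma>" for v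
    using P(3) h(2) \<gamma> by (auto simp: q_def the_inv_into_f_f)
  define \<Phi> where "\<Phi> y = g + min_abs_Rk n y *\<^sub>R q (sign_vec n y)" for y
  have "lipschitz_on_unit_ball_Rk \<gamma> n (sup_norm_Rk n) \<Phi>"
    unfolding lipschitz_on_unit_ball_Rk_def \<Phi>_def using lipschitz_sign_pattern_map[where q = q, OF \<gamma> q] by blast
  moreover have "p = \<Phi> (h p)" if "p \<in> P" for p
  proof -
    have "h p \<in> sign_vectors n" using h(1) that by blast
    moreover have "q (h p) = p - g" using that h(2) by (simp add: q_def the_inv_into_f_f)
    ultimately show ?thesis by (simp add: \<Phi>_def sign_vec_sign_vector min_abs_Rk_sign_vector)
  qed
  then have "P \<subseteq> \<Phi> ` unit_ball_Rk n (sup_norm_Rk n)" using h(1) sign_vectors_subset_unit_ball by blast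
  ultimately show ?thesis by (rule that)
qed

end

lemma lipschitz_width_le_of_points:
  fixes K :: "'a::real_normed_vector set"
  assumes K: "bounded K" and n: "n \<ge> 1" and \<gamma>: "\<gamma> \<ge> 0" and r: "r \<ge> 0"
    and P: "finite P" "card P \<le> 2 ^ n" "\<And>p. p \<in> P \<Longrightarrow> norm (p - g) \<le> \<gamma>"
    and approx: "\<And>f. f \<in> K \<Longrightarrow> \<exists>p\<in>P. norm (f - p) \<le> r"
  shows "lipschitz_width \<gamma> K n \<le> r"
proof -
  obtain \<Phi> where \<Phi>: "lipschitz_on_unit_ball_Rk \<gamma> n (sup_norm_Rk n) \<Phi>"
    "P \<subseteq> \<Phi> ` unit_ball_Rk n (sup_norm_Rk n)"
    using lipschitz_map_through_points[OF n \<gamma> P] by blast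
  show ?thesis
  proof (rule lipschitz_width_le[OF K \<gamma> n order.refl is_norm_sup_norm_Rk[OF n] \<Phi>(1) r])
    fix f assume "f \<in> K"
    then obtain p where "p \<in> P" "norm (f - p) \<le> r" using approx by blast
    then show "\<exists>y\<in>unit_ball_Rk n (sup_norm_Rk n). norm (f - \<Phi> y) \<le> r" using \<Phi>(2) by blast
  qed
qed

lemma norm_shrink_le:
  fixes v :: "'a::real_normed_vector"
  assumes "r > 0" "\<gamma> \<ge> 0" "norm v \<le> 2 * r"
  shows "norm (min 1 (\<gamma> / (2 * r)) *\<^sub>R v) \<le> \<gamma>"
proof -
  have "min 1 (\<gamma> / (2 * r)) * norm v \<le> \<gamma> / (2 * r) * (2 * r)"
    using assms by (intro mult_mono) auto
  then show ?thesis using assms by simp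
qed

text \<open>Shrinking c towards g by t, which keeps it within distance \<gamma> of g, costs at most \<eta> since
  \<gamma> \<ge> 2 (r - \<eta>).\<close>

lemma norm_diff_shrunk_center_le:
  fixes f g c :: "'a::real_normed_vector"
  assumes r: "r > 0" and \<gamma>: "\<gamma> \<ge> 0" "\<gamma> \<ge> 2 * (r - \<eta>)" and \<eta>: "\<eta> > 0" and eps: "eps \<ge> 0"
    and fg: "norm (f - g) \<le> r" and fc: "norm (f - c) \<le> eps"
  defines "t \<equiv> min 1 (\<gamma> / (2 * r))"
  shows "norm (f - (g + t *\<^sub>R (c - g))) \<le> eps + \<eta>"
proof -
  have t: "0 \<le> t" "t \<le> 1" using r \<gamma> by (auto simp: t_def)
  have "f - (g + t *\<^sub>R (c - g)) = (1 - t) *\<^sub>R (f - g) + t *\<^sub>R (f - c)" by (simp add: algebra_simps)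
  then have "norm (f - (g + t *\<^sub>R (c - g))) \<le> (1 - t) * norm (f - g) + t * norm (f - c)"
    using norm_triangle_ineq[of "(1 - t) *\<^sub>R (f - g)" "t *\<^sub>R (f - c)"] t by simp
  also have "\<dots> \<le> (1 - t) * r + t * eps" using fg fc t by (intro add_mono mult_left_mono) auto
  also have "\<dots> \<le> eps + \<eta>"
  proof (cases "t = 1")
    case False
    then have "t = \<gamma> / (2 * r)" by (auto simp: t_def min_def split: if_splits)
    then have "(1 - t) * r \<le> \<eta>" using r \<gamma> by (simp add: field_simps)
    moreover have "t * eps \<le> eps" using t eps by (simp add: mult_left_le_one_le)
    ultimately show ?thesis by linarith
  qed (use \<eta> in simp)
  finally show ?thesis .
qed

lemma lipschitz_width_le_cover_radius:
  fixes K :: "'a::real_normed_vector set"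
  assumes K: "bounded K" and n: "n \<ge> 1" and \<gamma>: "\<gamma> \<ge> 2 * rad K" and eps: "eps > 0"
    and S: "finite S" "card S \<le> 2 ^ n" "K \<subseteq> (\<Union>c\<in>S. cball c eps)" and \<eta>: "\<eta> > 0"
  shows "lipschitz_width \<gamma> K n \<le> eps + \<eta>"
proof -
  have \<gamma>0: "\<gamma> \<ge> 0" using rad_nonneg[OF K] \<gamma> by linarith
  obtain g where g: "\<And>f. f \<in> K \<Longrightarrow> norm (f - g) \<le> rad K + \<eta>"
    using exists_center_within_rad[OF K \<eta>] by blast
  define r where "r = rad K + \<eta>"
  have r: "r > 0" using rad_nonneg[OF K] \<eta> by (simp add: r_def)
  have nonneg: "0 \<le> eps + \<eta>" using eps \<eta> by simp
  show ?thesis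
  proof (cases "eps < r")
    case False
    then have "norm (f - g) \<le> eps + \<eta>" if "f \<in> K" for f using g[OF that] \<eta> by (simp add: r_def)
    then show ?thesis
      using \<gamma>0 by (intro lipschitz_width_le_of_points[OF K n \<gamma>0 nonneg, where P = "{g}" and g = g]) auto
  next
    case True
    define t where "t = min 1 (\<gamma> / (2 * r))"
    define S' where "S' = {c \<in> S. \<exists>f\<in>K. norm (f - c) \<le> eps}"
    define P where "P = (\<lambda>c. g + t *\<^sub>R (c - g)) ` S'"
    have S': "S' \<subseteq> S" unfolding S'_def by blast
    then have "finite S'" using S(1) by (rule finite_subset)
    have "finite P" unfolding P_def using \<open>finite S'\<close> by (rule finite_imageI)
    have "card P \<le> card S'" unfolding P_def using \<open>finite S'\<close> by (rule card_image_le)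
    then have "card P \<le> 2 ^ n" using card_mono[OF S(1) S'] S(2) by linarith
    have near: "norm (p - g) \<le> \<gamma>" if p: "p \<in> P" for p
    proof -
      obtain c f where c: "p = g + t *\<^sub>R (c - g)" "f \<in> K" "norm (f - c) \<le> eps"
        using p unfolding P_def S'_def by blast
      have "norm (c - g) \<le> norm (f - g) + norm (f - c)"
        using norm_triangle_ineq4[of "f - g" "f - c"] by simp
      then have "norm (c - g) \<le> 2 * r" using g[OF c(2)] c(3) True by (simp add: r_def)
      then show ?thesis using norm_shrink_le[OF r \<gamma>0] by (simp add: c(1) t_def)
    qed
    have approx: "\<exists>p\<in>P. norm (f - p) \<le> eps + \<eta>" if f: "f \<in> K" for f
    proof -
      obtain c where c: "c \<in> S" "f \<in> cball c eps" using S(3) f by blast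
      then have "norm (f - c) \<le> eps" by (simp add: dist_norm norm_minus_commute)
      then have "g + t *\<^sub>R (c - g) \<in> P" using c(1) f unfolding P_def S'_def by blast
      moreover have "\<gamma> \<ge> 2 * (r - \<eta>)" "eps \<ge> 0" using \<gamma> eps by (simp_all add: r_def)
      then have "norm (f - (g + t *\<^sub>R (c - g))) \<le> eps + \<eta>"
        unfolding t_def using \<open>norm (f - c) \<le> eps\<close> g[OF f, folded r_def]
        by (intro norm_diff_shrunk_center_le[OF r \<gamma>0 _ \<eta>])
      ultimately show ?thesis by blast
    qed
    show ?thesis
      by (rule lipschitz_width_le_of_points[OF K n \<gamma>0 nonneg \<open>finite P\<close> \<open>card P \<le> 2 ^ n\<close> near approx])
  qed
qed

lemma lipschitz_width_le_entropy_number: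
  fixes K :: "'a::real_normed_vector set"
  assumes "bounded K" "n \<ge> 1" "\<gamma> \<ge> 2 * rad K"
  shows "lipschitz_width \<gamma> K n \<le> entropy_number K n"
proof (rule entropy_number_ge[OF assms(1)])
  fix eps S assume cover: "eps > 0" "finite S" "card S \<le> 2 ^ n" "K \<subseteq> (\<Union>c\<in>S. cball c eps)"
  show "lipschitz_width \<gamma> K n \<le> eps"
  proof (rule field_le_epsilon)
    fix \<eta> :: real assume "\<eta> > 0"
    then show "lipschitz_width \<gamma> K n \<le> eps + \<eta>" by (rule lipschitz_width_le_cover_radius[OF assms cover])
  qed
qed

section \<open>Lower bound by entropy numbers\<close>

lemma entropy_number_le_of_lipschitz_width_less:
  fixes K :: "'a::real_normed_vector set"
  assumes K: "bounded K" and \<gamma>: "\<gamma> \<ge> 0" and n: "n \<ge> 1" and \<delta>: "\<delta> > 0"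
    and less: "lipschitz_width \<gamma> K n < \<delta>"
    and M: "(4 * real n * (\<gamma> + 1) / \<delta> + 1) ^ n \<le> 2 ^ M"
  shows "entropy_number K M \<le> 2 * \<delta>"
proof -
  obtain k N \<Phi> where k: "1 \<le> k" "k \<le> n" and norm_N: "is_norm_on_Rk k N"
    and lip: "lipschitz_on_unit_ball_Rk \<gamma> k N \<Phi>"
    and approx: "\<And>f. f \<in> K \<Longrightarrow> \<exists>y\<in>unit_ball_Rk k N. norm (f - \<Phi> y) < \<delta>"
    using lipschitz_width_lessE[OF K \<gamma> n less] by blast
  define \<rho> where "\<rho> = \<delta> / (\<gamma> + 1)"
  have \<rho>: "\<rho> > 0" using \<delta> \<gamma> by (simp add: \<rho>_def)
  obtain Y where Y: "Y \<subseteq> unit_ball_Rk k N" "finite Y" "card Y \<le> (nat \<lfloor>4 * real k / \<rho>\<rfloor> + 1) ^ k"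
    and net: "\<And>y. y \<in> unit_ball_Rk k N \<Longrightarrow> \<exists>y'\<in>Y. N (\<lambda>i. y i - y' i) \<le> \<rho>"
    using unit_ball_Rk_finite_net[OF norm_N k(1) \<rho>] by blast
  define A where "A = 4 * real n * (\<gamma> + 1) / \<delta> + 1"
  have "4 * real k / \<rho> \<le> 4 * real n * (\<gamma> + 1) / \<delta>"
    using k(2) \<gamma> \<delta> by (simp add: \<rho>_def divide_right_mono)
  then have "real (nat \<lfloor>4 * real k / \<rho>\<rfloor> + 1) \<le> A"
    using \<rho> by (simp add: A_def) linarith
  then have "real (card (\<Phi> ` Y)) \<le> A ^ k"
    using card_image_le[OF Y(2), of \<Phi>] Y(3) power_mono[of "real (nat \<lfloor>4 * real k / \<rho>\<rfloor> + 1)" A k]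
    by (smt (verit) of_nat_0_le_iff of_nat_le_iff of_nat_power)
  also have "\<dots> \<le> A ^ n" using k(2) \<gamma> \<delta> by (intro power_increasing) (auto simp: A_def)
  also have "\<dots> \<le> 2 ^ M" using M by (simp add: A_def)
  finally have card: "card (\<Phi> ` Y) \<le> 2 ^ M" by (metis of_nat_le_iff of_nat_numeral of_nat_power)
  have "\<exists>c\<in>\<Phi> ` Y. norm (f - c) \<le> 2 * \<delta>" if f: "f \<in> K" for f
  proof -
    obtain y where y: "y \<in> unit_ball_Rk k N" "norm (f - \<Phi> y) < \<delta>" using approx[OF f] by blast
    obtain y' where y': "y' \<in> Y" "N (\<lambda>i. y i - y' i) \<le> \<rho>" using net[OF y(1)] by blast
    have "norm (\<Phi> y - \<Phi> y') \<le> \<gamma> * \<rho>"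
      using lip y(1) y' Y(1) \<gamma> unfolding lipschitz_on_unit_ball_Rk_def
      by (meson order_trans mult_left_mono subsetD)
    also have "\<dots> \<le> \<delta>" using \<gamma> \<delta> by (simp add: \<rho>_def field_simps)
    finally have "norm (f - \<Phi> y') \<le> 2 * \<delta>"
      using y(2) norm_triangle_ineq[of "f - \<Phi> y" "\<Phi> y - \<Phi> y'"] by simp
    then show ?thesis using y'(1) by blast
  qed
  then have "K \<subseteq> (\<Union>c\<in>\<Phi> ` Y. cball c (2 * \<delta>))" by (force simp: dist_norm norm_minus_commute)
  then show ?thesis using entropy_number_le[of "2 * \<delta>" "\<Phi> ` Y" M K] \<delta> Y(2) card by simp
qed

lemma lipschitz_width_ge_if_entropy_number_gt:
  fixes K :: "'a::real_normed_vector set"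
  assumes K: "bounded K" and \<gamma>: "\<gamma> \<ge> 0" and n: "n \<ge> 1" and T: "T > 0"
    and large: "\<And>M::nat. real n \<le> real M \<Longrightarrow>
        real M \<le> real n * (log 2 (4 * real n * (\<gamma> + 1) / T + 1) + 2) \<Longrightarrow> entropy_number K M > 2 * T"
  shows "T \<le> lipschitz_width \<gamma> K n"
proof (rule ccontr)
  assume "\<not> T \<le> lipschitz_width \<gamma> K n"
  then have less: "lipschitz_width \<gamma> K n < T" by simp
  define A where "A = 4 * real n * (\<gamma> + 1) / T + 1"
  have A: "A \<ge> 1" using \<gamma> T by (simp add: A_def)
  define M where "M = nat \<lceil>real n * (log 2 A + 1)\<rceil>"
  have M: "real n * (log 2 A + 1) \<le> real M" "real M \<le> real n * (log 2 A + 1) + 1"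
    using A by (simp_all add: M_def of_nat_nat)
  have "real n \<le> real n * (log 2 A + 1)" using A mult_left_mono[of 1 "log 2 A + 1" "real n"] by simp
  then have "entropy_number K M > 2 * T"
    using M n by (intro large) (auto simp: A_def algebra_simps)
  moreover have "A ^ n \<le> 2 ^ M"
  proof -
    have "A ^ n = (2 powr (log 2 A)) powr (real n)" using A by (simp add: powr_realpow)
    also have "\<dots> = 2 powr (log 2 A * real n)" by (rule powr_powr)
    also have "\<dots> \<le> 2 powr (real M)" using M(1) A by (intro powr_mono) (auto simp: algebra_simps)
    finally show ?thesis by (simp add: powr_realpow)
  qed
  then have "entropy_number K M \<le> 2 * T"
    using entropy_number_le_of_lipschitz_width_less[OF K \<gamma> n T less] by (simp add: A_def)
  ultimately show False by linarith
qed

section \<open>Rates\<close>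

lemma log2_le_divide_ln2: "y \<ge> 1 \<Longrightarrow> log 2 y \<le> y / ln 2"
  using ln_le_minus_one[of y] by (simp add: log_def divide_right_mono)

lemma log2_le_real: "n \<ge> 1 \<Longrightarrow> log 2 (real n) \<le> real n"
proof -
  assume n: "n \<ge> 1"
  have "real n < 2 ^ n" by (metis of_nat_less_numeral_power_cancel_iff less_exp)
  then have "log 2 (real n) < log 2 (2 powr real n)" using n by (subst log_less_cancel_iff) (auto simp: powr_realpow)
  then show ?thesis by simp
qed

text \<open>As x tends to 0 the logarithmic factors grow only like powers of log (1/x).\<close>

lemma exists_small_scale:
  fixes a b c e p q :: real
  assumes "a \<ge> 0" "b > 0" "c > 0" "e \<ge> 0" "p \<ge> 0" "q \<ge> 0"
  obtains x where "0 < x"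
    "2 * x * (a + 2 + log 2 (b / x + 1)) powr p * (e + log 2 (a + 2 + log 2 (b / x + 1))) powr q < c"
proof -
  have "((\<lambda>x. 2 * x * (a + 2 + log 2 (b / x + 1)) powr p * (e + log 2 (a + 2 + log 2 (b / x + 1))) powr q)
      \<longlongrightarrow> 0) (at_right 0)"
    using assms by real_asymp
  then have "\<forall>\<^sub>F x in at_right 0.
      2 * x * (a + 2 + log 2 (b / x + 1)) powr p * (e + log 2 (a + 2 + log 2 (b / x + 1))) powr q < c"
    using assms(3) by (rule order_tendstoD)
  moreover have "\<forall>\<^sub>F x in at_right (0::real). 0 < x" by (rule eventually_at_right_less)
  ultimately have "\<forall>\<^sub>F x in at_right 0. (2 * x * (a + 2 + log 2 (b / x + 1)) powr p *
      (e + log 2 (a + 2 + log 2 (b / x + 1))) powr q < c) \<and> 0 < x"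
    by (rule eventually_conj)
  from eventually_happens'[OF trivial_limit_at_right_real this] show ?thesis using that by blast
qed

lemma entropy_index_bounds:
  fixes n :: nat and P B Y m :: real
  assumes n: "n \<ge> 2" and P: "P \<ge> 0" and B: "B \<ge> 1" and Y: "0 < Y" "Y \<le> real n powr P * B"
    and m: "real n \<le> m" "m \<le> real n * (log 2 Y + 2)"
  defines "L \<equiv> log 2 (real n)" and "D \<equiv> P + 2 + log 2 B"
  shows "m \<le> real n * L * D" "L \<le> log 2 m" "log 2 m \<le> L * (1 + 1 / ln 2 + log 2 D)"
proof -
  have np: "real n > 0" using n by simp
  have L: "L \<ge> 1" unfolding L_def using n by simp
  have lB: "log 2 B \<ge> 0" using B by simp
  have D: "D \<ge> 2" unfolding D_def using P lB by simp
  have "log 2 Y \<le> log 2 (real n powr P * B)" using Y B np by simp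
  also have "\<dots> = P * L + log 2 B" using np B by (simp add: log_mult log_powr L_def)
  finally have "log 2 Y + 2 \<le> L * D"
    using L lB P mult_right_mono[of 1 L "log 2 B + 2"] unfolding D_def by (simp add: algebra_simps)
  then have "real n * (log 2 Y + 2) \<le> real n * (L * D)" using np by (intro mult_left_mono) auto
  then show m_le: "m \<le> real n * L * D" using m(2) by (simp add: mult.assoc)
  show "L \<le> log 2 m" unfolding L_def using m(1) np by simp
  have "log 2 m \<le> log 2 (real n * L * D)" using m_le m(1) np by simp
  also have "\<dots> = L + log 2 L + log 2 D" using np L D by (simp add: log_mult L_def[symmetric])
  also have "\<dots> \<le> L + L / ln 2 + L * log 2 D"
  proof -
    have "0 \<le> log 2 D" using D by simp
    then have "log 2 D \<le> L * log 2 D" using L mult_right_mono[of 1 L "log 2 D"] by simp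
    then show ?thesis using log2_le_divide_ln2[OF L] by linarith
  qed
  also have "\<dots> = L * (1 + 1 / ln 2 + log 2 D)" by (simp add: algebra_simps)
  finally show "log 2 m \<le> L * (1 + 1 / ln 2 + log 2 D)" .
qed

lemma lipschitz_width_ge_polylog:
  fixes K :: "'a::real_normed_vector set"
  assumes K: "bounded K" and \<gamma>: "\<gamma> \<ge> 0" and n: "n \<ge> 2" and T: "T > 0" and P: "P \<ge> 0" and x: "x > 0"
    and scale: "4 * real n * (\<gamma> + 1) / T \<le> 4 * (\<gamma> + 1) / x * real n powr P"
  defines "L \<equiv> log 2 (real n)" and "D \<equiv> P + 2 + log 2 (4 * (\<gamma> + 1) / x + 1)"
  assumes large: "\<And>m::nat. real n \<le> real m \<Longrightarrow> real m \<le> real n * L * D \<Longrightarrow> L \<le> log 2 (real m) \<Longrightarrow>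
      log 2 (real m) \<le> L * (1 + 1 / ln 2 + log 2 D) \<Longrightarrow> 2 * T < entropy_number K m"
  shows "T \<le> lipschitz_width \<gamma> K n"
proof (rule lipschitz_width_ge_if_entropy_number_gt[OF K \<gamma> _ T])
  show "1 \<le> n" using n by simp
  fix M :: nat
  assume M: "real n \<le> real M" "real M \<le> real n * (log 2 (4 * real n * (\<gamma> + 1) / T + 1) + 2)"
  have "1 \<le> real n powr P" using n P by (simp add: ge_one_powr_ge_zero)
  then have "4 * real n * (\<gamma> + 1) / T + 1 \<le> real n powr P * (4 * (\<gamma> + 1) / x + 1)"
    using scale by (simp add: algebra_simps)
  moreover have "0 \<le> 4 * real n * (\<gamma> + 1) / T" "0 \<le> 4 * (\<gamma> + 1) / x" using \<gamma> T x by simp_all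
  ultimately show "2 * T < entropy_number K M"
    using large[OF M(1)] entropy_index_bounds[OF n P _ _ _ M] unfolding L_def D_def
    by (smt (verit))
qed

lemma polylog_weight_le_powr:
  fixes n :: nat
  assumes n: "n \<ge> 2"
  defines "L \<equiv> log 2 (real n)"
  shows "real n * (real n powr \<alpha> * L powr \<alpha> / L powr \<beta>) \<le> real n powr (1 + \<alpha> + \<bar>\<alpha> - \<beta>\<bar>)"
proof -
  have L: "1 \<le> L" "L \<le> real n" using n log2_le_real[of n] by (auto simp: L_def)
  have "L powr \<alpha> / L powr \<beta> = L powr (\<alpha> - \<beta>)" using L by (simp add: powr_diff)
  also have "\<dots> \<le> L powr \<bar>\<alpha> - \<beta>\<bar>" using L by (intro powr_mono) auto
  also have "\<dots> \<le> real n powr \<bar>\<alpha> - \<beta>\<bar>" using L by (intro powr_mono2) auto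
  finally have "real n * (real n powr \<alpha> * (L powr \<alpha> / L powr \<beta>))
      \<le> real n * (real n powr \<alpha> * real n powr \<bar>\<alpha> - \<beta>\<bar>)"
    by (intro mult_left_mono) auto
  also have "\<dots> = real n powr (1 + \<alpha> + \<bar>\<alpha> - \<beta>\<bar>)" using n by (simp add: powr_add)
  finally show ?thesis by simp
qed

lemma polylog_rate_ge:
  fixes n m L D E \<alpha> \<beta> :: real
  assumes \<alpha>: "\<alpha> > 0" and L: "L \<ge> 1" and n: "n > 0" and D: "D > 0" and E: "E \<ge> 1" and m: "m > 0"
    and m_le: "m \<le> n * L * D" and log_m: "L \<le> log 2 m" "log 2 m \<le> L * E"
  shows "L powr \<beta> / (n powr \<alpha> * L powr \<alpha>) / (D powr \<alpha> * E powr \<bar>\<beta>\<bar>) \<le> (log 2 m) powr \<beta> / m powr \<alpha>"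
proof -
  have num: "L powr \<beta> / E powr \<bar>\<beta>\<bar> \<le> (log 2 m) powr \<beta>"
  proof (cases "\<beta> \<ge> 0")
    case True
    have "L powr \<beta> / E powr \<bar>\<beta>\<bar> \<le> L powr \<beta>"
      using E L by (simp add: divide_le_eq ge_one_powr_ge_zero mult_le_cancel_left1)
    also have "\<dots> \<le> (log 2 m) powr \<beta>" using log_m(1) L True by (intro powr_mono2) auto
    finally show ?thesis .
  next
    case False
    have "L powr \<beta> / E powr \<bar>\<beta>\<bar> = (L * E) powr \<beta>"
      using False L E by (simp add: powr_mult powr_minus divide_inverse)
    also have "\<dots> \<le> (log 2 m) powr \<beta>" using log_m L E False by (intro powr_mono2') auto
    finally show ?thesis .
  qed
  have "m powr \<alpha> \<le> (n * L * D) powr \<alpha>" using m_le m \<alpha> by (intro powr_mono2) auto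
  also have "\<dots> = n powr \<alpha> * L powr \<alpha> * D powr \<alpha>" using n L D by (simp add: powr_mult)
  finally have den: "m powr \<alpha> \<le> n powr \<alpha> * L powr \<alpha> * D powr \<alpha>" .
  have "L powr \<beta> / E powr \<bar>\<beta>\<bar> / (n powr \<alpha> * L powr \<alpha> * D powr \<alpha>) \<le> (log 2 m) powr \<beta> / m powr \<alpha>"
    using num den m by (intro frac_le) auto
  then show ?thesis by (simp add: field_simps)
qed

lemma lipschitz_width_ge_poly_rate:
  fixes K :: "'a::real_normed_vector set"
  assumes K: "bounded K" and \<gamma>: "\<gamma> \<ge> 0" and \<alpha>: "\<alpha> > 0" and C: "C > 0"
    and H: "\<forall>n::nat. n \<ge> 2 \<longrightarrow> entropy_number K n \<ge> C * (log 2 (real n)) powr \<beta> / real n powr \<alpha>"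
  shows "\<exists>C'>0. \<forall>n::nat. n \<ge> 2 \<longrightarrow> lipschitz_width \<gamma> K n \<ge>
           C' * (log 2 (real n)) powr \<beta> / (real n powr \<alpha> * (log 2 (real n)) powr \<alpha>)"
proof -
  define P where "P = 1 + \<alpha> + \<bar>\<alpha> - \<beta>\<bar>"
  define b where "b = 4 * (\<gamma> + 1)"
  have P: "P \<ge> 0" and b: "b > 0" using \<alpha> \<gamma> by (auto simp: P_def b_def)
  obtain x where x: "0 < x" and small: "2 * x * (P + 2 + log 2 (b / x + 1)) powr \<alpha> *
      (1 + 1 / ln 2 + log 2 (P + 2 + log 2 (b / x + 1))) powr \<bar>\<beta>\<bar> < C"
    using exists_small_scale[of P b C "1 + 1 / ln 2" \<alpha> "\<bar>\<beta>\<bar>"] P b C \<alpha> by (auto intro: add_nonneg_nonneg)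
  define D where "D = P + 2 + log 2 (b / x + 1)"
  define E where "E = 1 + 1 / ln 2 + log 2 D"
  have "0 \<le> b / x" using b x by simp
  then have D: "D \<ge> 2" using P by (simp add: D_def)
  then have E: "E \<ge> 1" by (simp add: E_def)
  have "x * (log 2 (real n)) powr \<beta> / (real n powr \<alpha> * (log 2 (real n)) powr \<alpha>) \<le> lipschitz_width \<gamma> K n"
    if n: "n \<ge> 2" for n
  proof -
    define L where "L = log 2 (real n)"
    define Z where "Z = L powr \<beta> / (real n powr \<alpha> * L powr \<alpha>)"
    have L: "L \<ge> 1" and np: "real n > 0" using n by (simp_all add: L_def)
    have Z: "Z > 0" using L np by (simp add: Z_def)
    then have T: "x * Z > 0" using x by simp
    have "x * Z \<le> lipschitz_width \<gamma> K n"
    proof (rule lipschitz_width_ge_polylog[OF K \<gamma> n T P x(1)])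
      have "4 * real n * (\<gamma> + 1) / (x * Z) = b / x * (real n * (real n powr \<alpha> * L powr \<alpha> / L powr \<beta>))"
        using x L np by (simp add: Z_def b_def field_simps)
      also have "\<dots> \<le> b / x * real n powr P"
        using polylog_weight_le_powr[OF n, of \<alpha> \<beta>] b x by (intro mult_left_mono) (auto simp: P_def L_def)
      finally show "4 * real n * (\<gamma> + 1) / (x * Z) \<le> 4 * (\<gamma> + 1) / x * real n powr P" by (simp add: b_def)
    next
      fix m :: nat
      assume m: "real n \<le> real m" "real m \<le> real n * log 2 (real n) * (P + 2 + log 2 (4 * (\<gamma> + 1) / x + 1))"
        "log 2 (real n) \<le> log 2 (real m)"
        "log 2 (real m) \<le> log 2 (real n) * (1 + 1 / ln 2 + log 2 (P + 2 + log 2 (4 * (\<gamma> + 1) / x + 1)))"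
      have W: "D powr \<alpha> * E powr \<bar>\<beta>\<bar> > 0" using D E by simp
      have "2 * x * (D powr \<alpha> * E powr \<bar>\<beta>\<bar>) < C" using small by (simp add: D_def E_def mult.assoc)
      then have "2 * x < C / (D powr \<alpha> * E powr \<bar>\<beta>\<bar>)" using W by (simp add: pos_less_divide_eq)
      then have "2 * x * Z < C / (D powr \<alpha> * E powr \<bar>\<beta>\<bar>) * Z" using Z by (rule mult_strict_right_mono)
      then have "2 * (x * Z) < C * (Z / (D powr \<alpha> * E powr \<bar>\<beta>\<bar>))" by simp
      also have "\<dots> \<le> C * ((log 2 (real m)) powr \<beta> / real m powr \<alpha>)"
        using polylog_rate_ge[OF \<alpha> L np _ E, of D "real m" \<beta>] m D np C
        by (intro mult_left_mono) (auto simp: Z_def L_def D_def E_def b_def)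
      also have "\<dots> \<le> entropy_number K m" using H m(1) n by simp
      finally show "2 * (x * Z) < entropy_number K m" .
    qed
    then show ?thesis by (simp add: Z_def L_def)
  qed
  then show ?thesis using x(1) by blast
qed

lemma lipschitz_width_ge_log_rate:
  fixes K :: "'a::real_normed_vector set"
  assumes K: "bounded K" and \<gamma>: "\<gamma> \<ge> 0" and \<alpha>: "\<alpha> > 0" and c: "c > 0"
    and H: "\<forall>n::nat. n \<ge> 2 \<longrightarrow> c * (log 2 (real n)) powr (-\<alpha>) \<le> entropy_number K n"
  obtains x where "x > 0" "\<And>n. n \<ge> 2 \<Longrightarrow> x * (log 2 (real n)) powr (-\<alpha>) \<le> lipschitz_width \<gamma> K n"
proof -
  define P where "P = 1 + \<alpha>"
  define b where "b = 4 * (\<gamma> + 1)"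
  have P: "P \<ge> 0" and b: "b > 0" using \<alpha> \<gamma> by (auto simp: P_def b_def)
  obtain x where x: "0 < x" and small: "2 * x * (P + 2 + log 2 (b / x + 1)) powr 0 *
      (1 + 1 / ln 2 + log 2 (P + 2 + log 2 (b / x + 1))) powr \<alpha> < c"
    using exists_small_scale[of P b c "1 + 1 / ln 2" 0 \<alpha>] P b c \<alpha> by (auto intro: add_nonneg_nonneg)
  define D where "D = P + 2 + log 2 (b / x + 1)"
  define E where "E = 1 + 1 / ln 2 + log 2 D"
  have "0 \<le> b / x" using b x by simp
  then have D: "D \<ge> 2" using P by (simp add: D_def)
  then have E: "E \<ge> 1" by (simp add: E_def)
  have "x * (log 2 (real n)) powr (-\<alpha>) \<le> lipschitz_width \<gamma> K n" if n: "n \<ge> 2" for n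
  proof (rule lipschitz_width_ge_polylog[OF K \<gamma> n _ P x(1)])
    define L where "L = log 2 (real n)"
    have L: "L \<ge> 1" "L \<le> real n" and np: "real n > 0" using n log2_le_real[of n] by (simp_all add: L_def)
    show T: "x * (log 2 (real n)) powr (-\<alpha>) > 0" using x L by (simp add: L_def)
    have "4 * real n * (\<gamma> + 1) / (x * L powr (-\<alpha>)) = b / x * (real n * L powr \<alpha>)"
      using x L np by (simp add: b_def powr_minus field_simps)
    also have "\<dots> \<le> b / x * (real n * real n powr \<alpha>)"
      using L b x np \<alpha> by (intro mult_left_mono powr_mono2) auto
    also have "real n * real n powr \<alpha> = real n powr P" using np by (simp add: P_def powr_add)
    finally show "4 * real n * (\<gamma> + 1) / (x * log 2 (real n) powr - \<alpha>) \<le> 4 * (\<gamma> + 1) / x * real n powr P"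
      by (simp add: b_def L_def)
  next
    fix m :: nat
    assume m: "real n \<le> real m" "real m \<le> real n * log 2 (real n) * (P + 2 + log 2 (4 * (\<gamma> + 1) / x + 1))"
      "log 2 (real n) \<le> log 2 (real m)"
      "log 2 (real m) \<le> log 2 (real n) * (1 + 1 / ln 2 + log 2 (P + 2 + log 2 (4 * (\<gamma> + 1) / x + 1)))"
    have L: "log 2 (real n) \<ge> 1" using n by simp
    have "2 * x * E powr \<alpha> < c" using small D by (simp add: D_def E_def)
    then have "2 * (x * (log 2 (real n)) powr (-\<alpha>)) < c * (log 2 (real n) * E) powr (-\<alpha>)"
      using L E by (simp add: powr_mult powr_minus field_simps)
    also have "\<dots> \<le> c * (log 2 (real m)) powr (-\<alpha>)"
      using m L E \<alpha> c by (intro mult_left_mono powr_mono2') (auto simp: E_def D_def b_def)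
    also have "\<dots> \<le> entropy_number K m" using H m(1) n by simp
    finally show "2 * (x * (log 2 (real n)) powr (-\<alpha>)) < entropy_number K m" .
  qed
  then show ?thesis using that x(1) by blast
qed

lemma exists_subexp_constant:
  fixes \<alpha> c G :: real
  assumes \<alpha>: "0 < \<alpha>" "\<alpha> < 1" and c: "c > 0" and G: "G > 0"
  obtains c' where "c' \<ge> G" "c * (G + c') powr \<alpha> \<le> c'"
proof -
  define c' where "c' = max G ((2 powr \<alpha> * c) powr (1 / (1 - \<alpha>)))"
  have c'G: "c' \<ge> G" and c'0: "c' > 0" using G by (auto simp: c'_def)
  have "c * (G + c') powr \<alpha> \<le> c * (2 * c') powr \<alpha>"
    using c'G G \<alpha> c by (intro mult_left_mono powr_mono2) auto
  also have "\<dots> = (2 powr \<alpha> * c) * c' powr \<alpha>" using c'0 by (simp add: powr_mult)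
  also have "\<dots> \<le> c' powr (1 - \<alpha>) * c' powr \<alpha>"
  proof (rule mult_right_mono)
    have "2 powr \<alpha> * c = ((2 powr \<alpha> * c) powr (1 / (1 - \<alpha>))) powr (1 - \<alpha>)"
      using \<alpha> c by (simp add: powr_powr)
    also have "\<dots> \<le> c' powr (1 - \<alpha>)" using \<alpha> c by (intro powr_mono2) (auto simp: c'_def)
    finally show "2 powr \<alpha> * c \<le> c' powr (1 - \<alpha>)" .
  qed simp
  also have "\<dots> = c'" using c'0 by (simp flip: powr_add)
  finally show ?thesis using that c'G by blast
qed

lemma log2_le_powr_divide:
  fixes n :: nat and p :: real
  assumes n: "n \<ge> 1" and p: "p > 0"
  shows "log 2 (real n) \<le> real n powr p / (p * ln 2)"
proof -
  have "p * ln (real n) \<le> real n powr p"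
    using ln_le_minus_one[of "real n powr p"] n by (simp add: ln_powr)
  then show ?thesis using p by (simp add: log_def field_simps)
qed

text \<open>With N = n powr (\<alpha> / (1 - \<alpha>)) the indices m that matter satisfy m \<lesssim> n N, and
  (n N) powr \<alpha> = N.\<close>

lemma subexp_index_bound:
  fixes n :: nat and \<alpha> c c' a m Y :: real
  assumes n: "n \<ge> 1" and \<alpha>: "0 < \<alpha>" "\<alpha> < 1" and a: "a \<ge> 0" and c: "c > 0"
  defines "G \<equiv> 1 / (\<alpha> / (1 - \<alpha>) * ln 2) + a + 2"
  assumes c': "c' \<ge> G" "c * (G + c') powr \<alpha> \<le> c'"
    and Y: "0 < Y" "Y \<le> real n * 2 powr (c' * real n powr (\<alpha> / (1 - \<alpha>))) * 2 powr a"
    and m: "0 < m" "m \<le> real n * (log 2 Y + 2)"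
  shows "c * m powr \<alpha> \<le> c' * real n powr (\<alpha> / (1 - \<alpha>))"
proof -
  define p where "p = \<alpha> / (1 - \<alpha>)"
  define N where "N = real n powr p"
  have np: "real n \<ge> 1" and p: "p > 0" using n \<alpha> by (auto simp: p_def)
  have N: "N \<ge> 1" unfolding N_def using np p by (simp add: ge_one_powr_ge_zero)
  have G: "G = 1 / (p * ln 2) + a + 2" by (simp add: G_def p_def)
  have "p * ln 2 > 0" using p by simp
  then have "1 / (p * ln 2) > 0" by (simp only: zero_less_divide_1_iff)
  then have G0: "G > 0" using a unfolding G by linarith
  have "log 2 Y \<le> log 2 (real n * 2 powr (c' * N) * 2 powr a)" using Y np by (simp add: N_def p_def)
  also have "\<dots> = log 2 (real n) + c' * N + a" using np by (simp add: log_mult)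
  also have "log 2 (real n) \<le> N / (p * ln 2)" unfolding N_def by (rule log2_le_powr_divide[OF n p])
  finally have "log 2 Y + 2 \<le> N * (1 / (p * ln 2)) + c' * N + (a + 2)" by simp
  also have "a + 2 \<le> N * (a + 2)" using N a mult_right_mono[of 1 N "a + 2"] by simp
  finally have "log 2 Y + 2 \<le> N * (G + c')" by (simp add: G algebra_simps)
  then have "real n * (log 2 Y + 2) \<le> real n * (N * (G + c'))" using np by (intro mult_left_mono) auto
  then have "m \<le> real n * N * (G + c')" using m(2) by (simp add: mult.assoc)
  then have "m powr \<alpha> \<le> (real n * N * (G + c')) powr \<alpha>" using m(1) \<alpha> by (intro powr_mono2) auto
  also have "\<dots> = (real n powr \<alpha> * N powr \<alpha>) * (G + c') powr \<alpha>"
    using np N G0 c' by (simp add: powr_mult)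
  also have "real n powr \<alpha> * N powr \<alpha> = N"
    using np \<alpha> by (simp add: N_def p_def powr_powr flip: powr_add) (simp add: field_simps)
  finally have "c * m powr \<alpha> \<le> N * (c * (G + c') powr \<alpha>)" using c by (simp add: mult_left_mono)
  also have "\<dots> \<le> N * c'" using c' N by (intro mult_left_mono) auto
  finally show ?thesis by (simp add: N_def p_def mult.commute)
qed

lemma lipschitz_width_ge_subexp_rate:
  fixes K :: "'a::real_normed_vector set"
  assumes K: "bounded K" and \<gamma>: "\<gamma> \<ge> 0" and \<alpha>: "0 < \<alpha>" "\<alpha> < 1" and C: "C > 0" and c: "c > 0"
    and H: "\<forall>n::nat. n \<ge> 1 \<longrightarrow> entropy_number K n \<ge> C * 2 powr (- c * real n powr \<alpha>)"
  shows "\<exists>C' c'. C' > 0 \<and> c' > 0 \<and> (\<forall>n::nat. n \<ge> 1 \<longrightarrow>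
           lipschitz_width \<gamma> K n \<ge> C' * 2 powr (- c' * real n powr (\<alpha> / (1 - \<alpha>))))"
proof -
  define a where "a = log 2 (16 * (\<gamma> + 1) / C + 1)"
  have "0 \<le> 16 * (\<gamma> + 1) / C" using \<gamma> C by simp
  then have a: "a \<ge> 0" by (simp add: a_def)
  define G where "G = 1 / (\<alpha> / (1 - \<alpha>) * ln 2) + a + 2"
  have "\<alpha> / (1 - \<alpha>) * ln 2 > 0" using \<alpha> by simp
  then have "1 / (\<alpha> / (1 - \<alpha>) * ln 2) > 0" by (simp only: zero_less_divide_1_iff)
  then have "G > 0" using a unfolding G_def by linarith
  then obtain c' where c': "c' \<ge> G" "c * (G + c') powr \<alpha> \<le> c'"
    using exists_subexp_constant[OF \<alpha> c] by blast
  have "C / 4 * 2 powr (- c' * real n powr (\<alpha> / (1 - \<alpha>))) \<le> lipschitz_width \<gamma> K n"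
    if n: "n \<ge> 1" for n
  proof (rule lipschitz_width_ge_if_entropy_number_gt[OF K \<gamma> n])
    define N where "N = real n powr (\<alpha> / (1 - \<alpha>))"
    define T where "T = C / 4 * 2 powr (- c' * N)"
    show T: "T > 0" using C by (simp add: T_def)
    fix M :: nat
    assume M: "real n \<le> real M" "real M \<le> real n * (log 2 (4 * real n * (\<gamma> + 1) / T + 1) + 2)"
    define W where "W = real n * 2 powr (c' * N)"
    have "1 \<le> 2 powr (c' * N)" using c' \<open>G > 0\<close> by (intro ge_one_powr_ge_zero) (auto simp: N_def)
    then have "1 * 1 \<le> W" unfolding W_def using n by (intro mult_mono) auto
    moreover have "4 * real n * (\<gamma> + 1) / T = W * (16 * (\<gamma> + 1) / C)"
      using C by (simp add: W_def T_def powr_minus field_simps)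
    ultimately have "4 * real n * (\<gamma> + 1) / T + 1 \<le> W * (16 * (\<gamma> + 1) / C + 1)"
      by (simp add: algebra_simps)
    also have "16 * (\<gamma> + 1) / C + 1 = 2 powr a"
      using \<open>0 \<le> 16 * (\<gamma> + 1) / C\<close> by (simp add: a_def)
    finally have "4 * real n * (\<gamma> + 1) / T + 1 \<le> real n * 2 powr (c' * N) * 2 powr a"
      by (simp add: W_def)
    then have "c * real M powr \<alpha> \<le> c' * N"
      using subexp_index_bound[OF n \<alpha> a c c'[unfolded G_def] _ _ _ M(2)] M(1) n \<gamma> T
      by (simp add: N_def add_pos_nonneg)
    then have decay: "2 powr (- c' * N) \<le> 2 powr (- c * real M powr \<alpha>)" by (intro powr_mono) auto
    have "2 * T < C * 2 powr (- c' * N)" using C by (simp add: T_def)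
    also have "\<dots> \<le> C * 2 powr (- c * real M powr \<alpha>)" using decay C by (intro mult_left_mono) auto
    also have "\<dots> \<le> entropy_number K M" using H M(1) n by simp
    finally show "2 * T < entropy_number K M" .
  qed
  moreover have "C / 4 > 0" "c' > 0" using C c' \<open>G > 0\<close> by auto
  ultimately show ?thesis by blast
qed

lemma lipschitz_width_asymp_log_rate:
  fixes K :: "'a::real_normed_vector set"
  assumes K: "bounded K" and \<gamma>: "\<gamma> \<ge> 2 * rad K" and \<alpha>: "\<alpha> > 0"
    and bounds: "\<exists>c C. 0 < c \<and> c \<le> C \<and> (\<forall>n::nat. n \<ge> 2 \<longrightarrow>
      c * (log 2 (real n)) powr (-\<alpha>) \<le> entropy_number K n \<and>
      entropy_number K n \<le> C * (log 2 (real n)) powr (-\<alpha>))"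
  shows "\<exists>c C. 0 < c \<and> c \<le> C \<and> (\<forall>n::nat. n \<ge> 2 \<longrightarrow>
      c * (log 2 (real n)) powr (-\<alpha>) \<le> lipschitz_width \<gamma> K n \<and>
      lipschitz_width \<gamma> K n \<le> C * (log 2 (real n)) powr (-\<alpha>))"
proof -
  obtain c C where c: "0 < c" "c \<le> C" and H: "\<forall>n::nat. n \<ge> 2 \<longrightarrow>
    c * (log 2 (real n)) powr (-\<alpha>) \<le> entropy_number K n \<and>
    entropy_number K n \<le> C * (log 2 (real n)) powr (-\<alpha>)" using bounds by blast
  have \<gamma>0: "\<gamma> \<ge> 0" using rad_nonneg[OF K] \<gamma> by linarith
  obtain x where x: "x > 0" "\<And>n. n \<ge> 2 \<Longrightarrow> x * (log 2 (real n)) powr (-\<alpha>) \<le> lipschitz_width \<gamma> K n"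
    using lipschitz_width_ge_log_rate[OF K \<gamma>0 \<alpha> c(1)] H by blast
  have "min x C * (log 2 (real n)) powr (-\<alpha>) \<le> lipschitz_width \<gamma> K n \<and>
      lipschitz_width \<gamma> K n \<le> C * (log 2 (real n)) powr (-\<alpha>)" if n: "n \<ge> 2" for n
  proof
    have "min x C * (log 2 (real n)) powr (-\<alpha>) \<le> x * (log 2 (real n)) powr (-\<alpha>)"
      by (intro mult_right_mono) auto
    then show "min x C * (log 2 (real n)) powr (-\<alpha>) \<le> lipschitz_width \<gamma> K n" using x(2)[OF n] by linarith
    have "entropy_number K n \<le> C * (log 2 (real n)) powr (-\<alpha>)" using H n by blast
    then show "lipschitz_width \<gamma> K n \<le> C * (log 2 (real n)) powr (-\<alpha>)"
      using lipschitz_width_le_entropy_number[OF K _ \<gamma>, of n] n by linarith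
  qed
  moreover have "0 < min x C" "min x C \<le> C" using x(1) c by auto
  ultimately show ?thesis by blast
qed

theorem corollary4p8:
  fixes K :: "'a::banach set" and \<gamma> :: real
  assumes "compact K" and "\<gamma> \<ge> 2 * rad K"
  shows
   "(\<forall>\<alpha> \<beta> C. \<alpha> > 0 \<longrightarrow>
       (\<forall>n::nat. n \<ge> 2 \<longrightarrow> entropy_number K n \<le> C * (log 2 (real n)) powr \<beta> / real n powr \<alpha>) \<longrightarrow>
       (\<forall>n::nat. n \<ge> 2 \<longrightarrow> lipschitz_width \<gamma> K n \<le> C * (log 2 (real n)) powr \<beta> / real n powr \<alpha>))
  \<and> (\<forall>\<alpha> \<beta> C. \<alpha> > 0 \<longrightarrow> C > 0 \<longrightarrow>
       (\<forall>n::nat. n \<ge> 2 \<longrightarrow> entropy_number K n \<ge> C * (log 2 (real n)) powr \<beta> / real n powr \<alpha>) \<longrightarrow>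
       (\<exists>C'>0. \<forall>n::nat. n \<ge> 2 \<longrightarrow> lipschitz_width \<gamma> K n \<ge>
           C' * (log 2 (real n)) powr \<beta> / (real n powr \<alpha> * (log 2 (real n)) powr \<alpha>)))
  \<and> (\<forall>\<alpha>. \<alpha> > 0 \<longrightarrow>
       (\<exists>c C. 0 < c \<and> c \<le> C \<and> (\<forall>n::nat. n \<ge> 2 \<longrightarrow>
           c * (log 2 (real n)) powr (-\<alpha>) \<le> entropy_number K n \<and>
           entropy_number K n \<le> C * (log 2 (real n)) powr (-\<alpha>))) \<longrightarrow>
       (\<exists>c C. 0 < c \<and> c \<le> C \<and> (\<forall>n::nat. n \<ge> 2 \<longrightarrow>
           c * (log 2 (real n)) powr (-\<alpha>) \<le> lipschitz_width \<gamma> K n \<and>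
           lipschitz_width \<gamma> K n \<le> C * (log 2 (real n)) powr (-\<alpha>))))
  \<and> (\<forall>\<alpha> C c. 0 < \<alpha> \<longrightarrow> \<alpha> < 1 \<longrightarrow>
       (\<forall>n::nat. n \<ge> 1 \<longrightarrow> entropy_number K n \<le> C * 2 powr (- c * real n powr \<alpha>)) \<longrightarrow>
       (\<forall>n::nat. n \<ge> 1 \<longrightarrow> lipschitz_width \<gamma> K n \<le> C * 2 powr (- c * real n powr \<alpha>)))
  \<and> (\<forall>\<alpha> C c. 0 < \<alpha> \<longrightarrow> \<alpha> < 1 \<longrightarrow> C > 0 \<longrightarrow> c > 0 \<longrightarrow>
       (\<forall>n::nat. n \<ge> 1 \<longrightarrow> entropy_number K n \<ge> C * 2 powr (- c * real n powr \<alpha>)) \<longrightarrow>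
       (\<exists>C' c'. C' > 0 \<and> c' > 0 \<and> (\<forall>n::nat. n \<ge> 1 \<longrightarrow>
           lipschitz_width \<gamma> K n \<ge> C' * 2 powr (- c' * real n powr (\<alpha> / (1 - \<alpha>))))))"
proof -
  have K: "bounded K" using assms(1) by (rule compact_imp_bounded)
  have \<gamma>: "\<gamma> \<ge> 0" using rad_nonneg[OF K] assms(2) by linarith
  have upper: "lipschitz_width \<gamma> K n \<le> entropy_number K n" if "n \<ge> 1" for n
    using lipschitz_width_le_entropy_number[OF K that assms(2)] .
  then have upper2: "lipschitz_width \<gamma> K n \<le> entropy_number K n" if "n \<ge> 2" for n
    using that by simp
  show ?thesis
    apply (intro conjI allI impI)
    subgoal premises prems for \<alpha> \<beta> C n using upper2 prems(2,3) order_trans by blast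
    subgoal by (rule lipschitz_width_ge_poly_rate[OF K \<gamma>])
    subgoal by (rule lipschitz_width_asymp_log_rate[OF K assms(2)])
    subgoal premises prems for \<alpha> C c n using upper prems(3,4) order_trans by blast
    subgoal by (rule lipschitz_width_ge_subexp_rate[OF K \<gamma>])
    done
qed

end
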